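(* Let $\mathcal{O}$ be an order in a number field $K$, let $\mathfrak{d}\subseteq\mathfrak{m}\subseteq\mathcal{O}$ be nonzero integral ideals, and let $\Sigma$ be any (possibly empty) set of real places of $K$. Then the inclusion $J^*_{\mathfrak{d}}(\mathcal{O})\subseteq J^*_{\mathfrak{m}}(\mathcal{O})$ induces an isomorphism $$\mathrm{Cl}_{\mathfrak{m},\Sigma}(\mathcal{O})=\frac{J^*_{\mathfrak{d}}(\mathcal{O})}{P^{\mathfrak{d}}_{\mathfrak{m},\Sigma}(\mathcal{O})}.$$
   Context: An order is a subring of $K$ containing $1$, free of rank $[K:\mathbb Q]$ over $\mathbb Z$. A fractional $\mathcal O$-ideal is an $\mathcal O$-submodule $\mathfrak a\subseteq K$ with $\lambda\mathfrak a\subseteq\mathcal O$ for some $\lambda\in K^\times$, invertible if $\mathfrak a\mathfrak b=\mathcal O$ for some fractional $\mathfrak b$; it is coprime to an integral ideal $\mathfrak c$ if $\mathfrak a=(\mathfrak a_1:\mathfrak b_1)=\{x\in K:x\mathfrak b_1\subseteq\mathfrak a_1\}$ with $\mathfrak a_1$ integral, $\mathfrak b_1$ invertible integral, both coprime to $\mathfrak c$ (sum equal to $\mathcal O$). $J^*_{\mathfrak c}(\mathcal O)$ is the group of invertible fractional ideals coprime to $\mathfrak c$. For $\alpha\in K$, $\alpha\equiv1\pmod{\mathfrak m}$ means $\alpha-1\in\mathfrak m\mathcal O[S_{\mathfrak m}^{-1}]$, $S_{\mathfrak m}=\{a\in\mathcal O:a\mathcal O+\mathfrak m=\mathcal O\}$.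 $P_{\mathfrak m,\Sigma}(\mathcal O)=\{\alpha\mathcal O:\alpha\in K^\times,\alpha\equiv1\pmod{\mathfrak m},\rho(\alpha)>0\ \forall\rho\in\Sigma\}$, $\mathrm{Cl}_{\mathfrak m,\Sigma}(\mathcal O)=J^*_{\mathfrak m}(\mathcal O)/P_{\mathfrak m,\Sigma}(\mathcal O)$, and $P^{\mathfrak d}_{\mathfrak m,\Sigma}(\mathcal O)$ is the subgroup of those $\alpha\mathcal O\in P_{\mathfrak m,\Sigma}(\mathcal O)$ with $\alpha\mathcal O$ coprime to $\mathfrak d$. *)

theory Defs
  imports Complex_Main "HOL-Algebra.Coset"
begin

text \<open>The number field K is the whole type 'a (a field of characteristic 0);
finite-dimensionality over Q is part of the definition of an order below.\<close>

definition nf_is_order :: "'a::field_char_0 set \<Rightarrow> bool" where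
  "nf_is_order Oc \<longleftrightarrow>
     1 \<in> Oc \<and> (\<forall>x\<in>Oc. \<forall>y\<in>Oc. x + y \<in> Oc \<and> x - y \<in> Oc \<and> x * y \<in> Oc) \<and>
     (\<exists>(n::nat) (b::nat \<Rightarrow> 'a).
        \<comment> \<open>b 0..b (n-1) is a Q-basis of K, so n = [K:Q]\<close>
        (\<forall>c::nat \<Rightarrow> rat. (\<Sum>i<n. of_rat (c i) * b i) = 0 \<longrightarrow> (\<forall>i<n. c i = 0)) \<and>
        (\<forall>x. \<exists>c::nat \<Rightarrow> rat. x = (\<Sum>i<n. of_rat (c i) * b i)) \<and>
        \<comment> \<open>and a Z-basis of Oc\<close>
        Oc = {(\<Sum>i<n. of_int (c i) * b i) | c::nat \<Rightarrow> int. True})"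

definition nf_integral_ideal :: "'a::field_char_0 set \<Rightarrow> 'a set \<Rightarrow> bool" where
  "nf_integral_ideal Oc I \<longleftrightarrow> I \<subseteq> Oc \<and> 0 \<in> I \<and> (\<forall>x\<in>I. \<forall>y\<in>I. x + y \<in> I) \<and>
     (\<forall>r\<in>Oc. \<forall>x\<in>I. r * x \<in> I)"

definition nf_fractional_ideal :: "'a::field_char_0 set \<Rightarrow> 'a set \<Rightarrow> bool" where
  "nf_fractional_ideal Oc A \<longleftrightarrow> 0 \<in> A \<and> (\<forall>x\<in>A. \<forall>y\<in>A. x + y \<in> A) \<and>
     (\<forall>r\<in>Oc. \<forall>x\<in>A. r * x \<in> A) \<and> (\<exists>l. l \<noteq> 0 \<and> (\<lambda>x. l * x) ` A \<subseteq> Oc)"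

definition nf_ideal_mult :: "'a::field_char_0 set \<Rightarrow> 'a set \<Rightarrow> 'a set" where
  "nf_ideal_mult A B = {(\<Sum>i<n. a i * b i) | (n::nat) a b. \<forall>i<n. a i \<in> A \<and> b i \<in> B}"

definition nf_ideal_sum :: "'a::field_char_0 set \<Rightarrow> 'a set \<Rightarrow> 'a set" where
  "nf_ideal_sum A B = {a + b | a b. a \<in> A \<and> b \<in> B}"

definition nf_colon :: "'a::field_char_0 set \<Rightarrow> 'a set \<Rightarrow> 'a set" where
  "nf_colon A B = {x. \<forall>b\<in>B. x * b \<in> A}"

definition nf_invertible :: "'a::field_char_0 set \<Rightarrow> 'a set \<Rightarrow> bool" where
  "nf_invertible Oc A \<longleftrightarrow> nf_fractional_ideal Oc A \<and>
     (\<exists>B. nf_fractional_ideal Oc B \<and> nf_ideal_mult A B = Oc)"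

definition nf_frac_coprime :: "'a::field_char_0 set \<Rightarrow> 'a set \<Rightarrow> 'a set \<Rightarrow> bool" where
  "nf_frac_coprime Oc A C \<longleftrightarrow>
     (\<exists>A1 B1. A = nf_colon A1 B1 \<and> nf_integral_ideal Oc A1 \<and> nf_integral_ideal Oc B1 \<and>
        nf_invertible Oc B1 \<and> nf_ideal_sum A1 C = Oc \<and> nf_ideal_sum B1 C = Oc)"

definition nf_Jstar :: "'a::field_char_0 set \<Rightarrow> 'a set \<Rightarrow> 'a set set" where
  "nf_Jstar Oc C = {A. nf_invertible Oc A \<and> nf_frac_coprime Oc A C}"

definition nf_principal :: "'a::field_char_0 set \<Rightarrow> 'a \<Rightarrow> 'a set" where
  "nf_principal Oc a = (\<lambda>x. a * x) ` Oc"

definition nf_S :: "'a::field_char_0 set \<Rightarrow> 'a set \<Rightarrow> 'a set" where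
  "nf_S Oc M = {a \<in> Oc. nf_ideal_sum (nf_principal Oc a) M = Oc}"

definition nf_localize :: "'a::field_char_0 set \<Rightarrow> 'a set \<Rightarrow> 'a set" where
  "nf_localize Oc S = {x / s | x s. x \<in> Oc \<and> s \<in> S \<and> s \<noteq> 0}"

definition nf_cong1 :: "'a::field_char_0 set \<Rightarrow> 'a set \<Rightarrow> 'a \<Rightarrow> bool" where
  "nf_cong1 Oc M \<alpha> \<longleftrightarrow> \<alpha> - 1 \<in> nf_ideal_mult M (nf_localize Oc (nf_S Oc M))"

text \<open>Real places = real embeddings (field homomorphisms K \<rightarrow> R).\<close>
definition nf_real_embedding :: "('a::field_char_0 \<Rightarrow> real) \<Rightarrow> bool" where
  "nf_real_embedding \<rho> \<longleftrightarrow> \<rho> 1 = 1 \<and> (\<forall>x y. \<rho> (x + y) = \<rho> x + \<rho> y) \<and>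
     (\<forall>x y. \<rho> (x * y) = \<rho> x * \<rho> y)"

definition nf_P :: "'a::field_char_0 set \<Rightarrow> 'a set \<Rightarrow> ('a \<Rightarrow> real) set \<Rightarrow> 'a set set" where
  "nf_P Oc M Sig = {nf_principal Oc \<alpha> | \<alpha>. \<alpha> \<noteq> 0 \<and> nf_cong1 Oc M \<alpha> \<and> (\<forall>\<rho>\<in>Sig. \<rho> \<alpha> > 0)}"

definition nf_Pd :: "'a::field_char_0 set \<Rightarrow> 'a set \<Rightarrow> 'a set \<Rightarrow> ('a \<Rightarrow> real) set \<Rightarrow> 'a set set" where
  "nf_Pd Oc D M Sig = {A \<in> nf_P Oc M Sig. nf_frac_coprime Oc A D}"

definition nf_Jgroup :: "'a::field_char_0 set \<Rightarrow> 'a set \<Rightarrow> 'a set monoid" where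
  "nf_Jgroup Oc C = \<lparr>carrier = nf_Jstar Oc C, mult = nf_ideal_mult, one = Oc\<rparr>"

end

(*
  Every class of J*_m modulo P_{m,Sigma} meets J*_d, and J*_d meets P_{m,Sigma} exactly in
  P^d_{m,Sigma}; the second isomorphism theorem then identifies J*_d / P^d_{m,Sigma} with
  J*_m / P_{m,Sigma}.  Since J*_m is generated by invertible integral ideals I coprime to m, it
  suffices to write such an I as beta O * beta^-1 I with beta O in P_{m,Sigma} and
  beta^-1 I = (beta I^-1)^-1 coprime to d, i.e. to find beta in I and y in I^-1 with
  beta y = 1 mod d, beta = 1 mod m and beta positive at every real place.

  The residue ring O/d is finite, so every element of O has a power that is idempotent mod d.
  Splitting O/d along such idempotents, one summand of 1 = sum x_i y_i (x_i in I, y_i in I^-1) at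
  a time, yields a single product x y = 1 mod d; a similar splitting turns x into some beta = 1
  mod m.  Finally beta + k C (1 + beta^2), with C a positive integer in d and in I, stays in I
  with the same congruences and is positive at every real place, because a + C (1 + a^2) > 0.
*)
theory Submission
  imports Defs "HOL-Algebra.SndIsomorphismGrp"
begin

section \<open>Subrings of a field, their ideals and congruences\<close>

locale field_subring =
  fixes Oc :: "'a::field_char_0 set"
  assumes one_mem: "1 \<in> Oc"
    and add_mem: "x \<in> Oc \<Longrightarrow> y \<in> Oc \<Longrightarrow> x + y \<in> Oc"
    and diff_mem: "x \<in> Oc \<Longrightarrow> y \<in> Oc \<Longrightarrow> x - y \<in> Oc"
    and mult_mem: "x \<in> Oc \<Longrightarrow> y \<in> Oc \<Longrightarrow> x * y \<in> Oc"
begin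

lemma zero_mem: "0 \<in> Oc"
  using diff_mem[OF one_mem one_mem] by simp

lemma uminus_mem: "x \<in> Oc \<Longrightarrow> - x \<in> Oc"
  using diff_mem[OF zero_mem] by fastforce

lemma power_mem: "x \<in> Oc \<Longrightarrow> x ^ k \<in> Oc"
  by (induction k) (auto intro: one_mem mult_mem)

lemma sum_mem: "(\<And>i. i \<in> A \<Longrightarrow> f i \<in> Oc) \<Longrightarrow> sum f A \<in> Oc"
  by (induction A rule: infinite_finite_induct) (auto intro: zero_mem add_mem)

lemma of_nat_mem: "of_nat k \<in> Oc"
  by (induction k) (auto intro: zero_mem one_mem add_mem)

lemma of_int_mem: "of_int k \<in> Oc"
  by (cases k rule: int_cases2) (auto intro: of_nat_mem uminus_mem)

end

lemma field_subring_order: "nf_is_order Oc \<Longrightarrow> field_subring Oc"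
  unfolding nf_is_order_def by unfold_locales blast+

lemma ideal_subset: "nf_integral_ideal Oc I \<Longrightarrow> x \<in> I \<Longrightarrow> x \<in> Oc"
  by (auto simp: nf_integral_ideal_def)

lemma ideal_zero: "nf_integral_ideal Oc I \<Longrightarrow> 0 \<in> I"
  by (auto simp: nf_integral_ideal_def)

lemma ideal_add: "nf_integral_ideal Oc I \<Longrightarrow> x \<in> I \<Longrightarrow> y \<in> I \<Longrightarrow> x + y \<in> I"
  by (auto simp: nf_integral_ideal_def)

lemma ideal_mult_left: "nf_integral_ideal Oc I \<Longrightarrow> r \<in> Oc \<Longrightarrow> x \<in> I \<Longrightarrow> r * x \<in> I"
  by (auto simp: nf_integral_ideal_def)

lemma ideal_mult_right: "nf_integral_ideal Oc I \<Longrightarrow> r \<in> Oc \<Longrightarrow> x \<in> I \<Longrightarrow> x * r \<in> I"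
  using ideal_mult_left[of Oc I r x] by (simp add: mult.commute)

context field_subring
begin

lemma ideal_uminus: "nf_integral_ideal Oc I \<Longrightarrow> x \<in> I \<Longrightarrow> - x \<in> I"
  using ideal_mult_left[of Oc I "-1" x] uminus_mem[OF one_mem] by simp

lemma ideal_diff: "nf_integral_ideal Oc I \<Longrightarrow> x \<in> I \<Longrightarrow> y \<in> I \<Longrightarrow> x - y \<in> I"
  using ideal_add[of Oc I x "- y"] ideal_uminus[of I y] by simp

lemma integral_ideal_self: "nf_integral_ideal Oc Oc"
  unfolding nf_integral_ideal_def by (auto intro: zero_mem add_mem mult_mem)

end

definition omodule :: "'a::field_char_0 set \<Rightarrow> 'a set \<Rightarrow> bool" where
  "omodule Oc A \<longleftrightarrow> 0 \<in> A \<and> (\<forall>x\<in>A. \<forall>y\<in>A. x + y \<in> A) \<and> (\<forall>r\<in>Oc. \<forall>x\<in>A. r * x \<in> A)"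

lemma omodule_zero: "omodule Oc A \<Longrightarrow> 0 \<in> A"
  by (simp add: omodule_def)

lemma omodule_add: "omodule Oc A \<Longrightarrow> x \<in> A \<Longrightarrow> y \<in> A \<Longrightarrow> x + y \<in> A"
  by (simp add: omodule_def)

lemma omodule_mult_left: "omodule Oc A \<Longrightarrow> r \<in> Oc \<Longrightarrow> x \<in> A \<Longrightarrow> r * x \<in> A"
  by (simp add: omodule_def)

lemma omodule_mult_right: "omodule Oc A \<Longrightarrow> r \<in> Oc \<Longrightarrow> x \<in> A \<Longrightarrow> x * r \<in> A"
  by (simp add: omodule_def mult.commute)

lemma omodule_integral_ideal: "nf_integral_ideal Oc A \<Longrightarrow> omodule Oc A"
  unfolding nf_integral_ideal_def omodule_def by blast

definition ideal_cong :: "'a::field_char_0 set \<Rightarrow> 'a \<Rightarrow> 'a \<Rightarrow> bool" where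
  "ideal_cong E a b \<longleftrightarrow> a - b \<in> E"

text \<open>The ideal is the first argument of \<open>ideal_cong\<close> so that \<open>\<dots>\<close> in calculations refers to
  the right-hand side of a congruence.\<close>

abbreviation cong_mod :: "'a::field_char_0 \<Rightarrow> 'a \<Rightarrow> 'a set \<Rightarrow> bool"
    (\<open>(1[_ = _] '(mod\<^sub>I _'))\<close>) where
  "[a = b] (mod\<^sub>I E) \<equiv> ideal_cong E a b"

lemma ideal_cong_mono: "D \<subseteq> M \<Longrightarrow> [a = b] (mod\<^sub>I D) \<Longrightarrow> [a = b] (mod\<^sub>I M)"
  unfolding ideal_cong_def by blast

locale ideal_congruence = field_subring +
  fixes E :: "'a::field_char_0 set"
  assumes ideal: "nf_integral_ideal Oc E"
begin

lemma cong_refl [simp]: "[a = a] (mod\<^sub>I E)"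
  unfolding ideal_cong_def using ideal_zero[OF ideal] by simp

lemma cong_sym: "[a = b] (mod\<^sub>I E) \<Longrightarrow> [b = a] (mod\<^sub>I E)"
  unfolding ideal_cong_def using ideal_uminus[OF ideal, of "a - b"] by simp

lemma cong_trans [trans]: "[a = b] (mod\<^sub>I E) \<Longrightarrow> [b = c] (mod\<^sub>I E) \<Longrightarrow> [a = c] (mod\<^sub>I E)"
  unfolding ideal_cong_def using ideal_add[OF ideal, of "a - b" "b - c"] by simp

lemma cong_add: "[a = b] (mod\<^sub>I E) \<Longrightarrow> [c = d] (mod\<^sub>I E) \<Longrightarrow> [a + c = b + d] (mod\<^sub>I E)"
  unfolding ideal_cong_def using ideal_add[OF ideal, of "a - b" "c - d"] by (simp add: algebra_simps)

lemma cong_diff: "[a = b] (mod\<^sub>I E) \<Longrightarrow> [c = d] (mod\<^sub>I E) \<Longrightarrow> [a - c = b - d] (mod\<^sub>I E)"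
  unfolding ideal_cong_def using ideal_diff[OF ideal, of "a - b" "c - d"] by (simp add: algebra_simps)

lemma cong_mult_left: "c \<in> Oc \<Longrightarrow> [a = b] (mod\<^sub>I E) \<Longrightarrow> [c * a = c * b] (mod\<^sub>I E)"
  unfolding ideal_cong_def using ideal_mult_left[OF ideal, of c "a - b"] by (simp add: algebra_simps)

lemma cong_mult_right: "c \<in> Oc \<Longrightarrow> [a = b] (mod\<^sub>I E) \<Longrightarrow> [a * c = b * c] (mod\<^sub>I E)"
  using cong_mult_left[of c a b] by (simp add: mult.commute)

lemma cong_mult:
  "a \<in> Oc \<Longrightarrow> d \<in> Oc \<Longrightarrow> [a = b] (mod\<^sub>I E) \<Longrightarrow> [c = d] (mod\<^sub>I E) \<Longrightarrow> [a * c = b * d] (mod\<^sub>I E)"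
  using cong_trans[OF cong_mult_left[of a c d] cong_mult_right[of d a b]] by simp

lemma cong_power: "a \<in> Oc \<Longrightarrow> b \<in> Oc \<Longrightarrow> [a = b] (mod\<^sub>I E) \<Longrightarrow> [a ^ m = b ^ m] (mod\<^sub>I E)"
  by (induction m) (auto intro: cong_mult power_mem)

lemma idempotent_power_cong:
  assumes "g \<in> Oc" "[g * g = g] (mod\<^sub>I E)" "m \<ge> 1"
  shows "[g ^ m = g] (mod\<^sub>I E)"
  using assms(3)
proof (induction m rule: dec_induct)
  case (step m)
  have "[g * g ^ m = g * g] (mod\<^sub>I E)" using assms(1) step.IH by (rule cong_mult_left)
  also have "[g * g = g] (mod\<^sub>I E)" by (rule assms(2))
  finally show ?case by simp
qed simp

lemma idempotent_complement:
  assumes "g \<in> Oc" "e \<in> Oc" and gg: "[g * g = g] (mod\<^sub>I E)" and ee: "[e * e = e] (mod\<^sub>I E)"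
    and eg: "[e * g = e] (mod\<^sub>I E)"
  shows "[(g - e) * (g - e) = g - e] (mod\<^sub>I E)" "[g * (g - e) = g - e] (mod\<^sub>I E)"
    "[e * (g - e) = 0] (mod\<^sub>I E)"
proof -
  have "(g - e) * (g - e) = g * g - e * g - e * g + e * e" by algebra
  also have "[\<dots> = g - e - e + e] (mod\<^sub>I E)" by (intro cong_add cong_diff gg eg ee)
  finally show "[(g - e) * (g - e) = g - e] (mod\<^sub>I E)" by simp
  have "g * (g - e) = g * g - e * g" by algebra
  also have "[\<dots> = g - e] (mod\<^sub>I E)" by (intro cong_diff gg eg)
  finally show "[g * (g - e) = g - e] (mod\<^sub>I E)" .
  have "e * (g - e) = e * g - e * e" by algebra
  also have "[\<dots> = e - e] (mod\<^sub>I E)" by (intro cong_diff eg ee)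
  finally show "[e * (g - e) = 0] (mod\<^sub>I E)" by simp
qed

lemma orthogonal_idempotents_product:
  assumes X: "omodule Oc X" and Y: "omodule Oc Y" and XY: "\<And>a b. a \<in> X \<Longrightarrow> b \<in> Y \<Longrightarrow> a * b \<in> Oc"
    and Oc: "e \<in> Oc" "h \<in> Oc" "t \<in> Oc" and xy: "x \<in> X" "y \<in> Y" "e = x * y * t"
    and ee: "[e * e = e] (mod\<^sub>I E)" and hh: "[h * h = h] (mod\<^sub>I E)" and eh: "[e * h = 0] (mod\<^sub>I E)"
    and ab: "a \<in> X" "b \<in> Y" "[a * b = h] (mod\<^sub>I E)"
  shows "\<exists>a'\<in>X. \<exists>b'\<in>Y. [a' * b' = e + h] (mod\<^sub>I E)"
proof (intro bexI)
  define c where "c = x * b + a * y * t"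
  have "x * b \<in> Oc" "a * y \<in> Oc" using XY xy ab by auto
  then have "c \<in> Oc" unfolding c_def using Oc(3) by (auto intro: add_mem mult_mem)
  have "(e * x + h * a) * (y * t * e + b * h) = e * e * e + e * h * c + h * h * (a * b)"
    unfolding c_def xy(3) by algebra
  also have "[\<dots> = e + 0 * c + h] (mod\<^sub>I E)"
  proof (intro cong_add)
    have "[e * e * e = e * e] (mod\<^sub>I E)" using cong_mult_left[OF Oc(1) ee] by (simp add: ac_simps)
    then show "[e * e * e = e] (mod\<^sub>I E)" using ee by (rule cong_trans)
    show "[e * h * c = 0 * c] (mod\<^sub>I E)" by (intro cong_mult_right \<open>c \<in> Oc\<close> eh)
    have "[h * h * (a * b) = h * h * h] (mod\<^sub>I E)" by (intro cong_mult_left mult_mem Oc(2) ab(3))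
    also have "[h * h * h = h * h] (mod\<^sub>I E)" using cong_mult_left[OF Oc(2) hh] by (simp add: ac_simps)
    also note hh
    finally show "[h * h * (a * b) = h] (mod\<^sub>I E)" .
  qed
  finally show "[(e * x + h * a) * (y * t * e + b * h) = e + h] (mod\<^sub>I E)" by simp
  show "e * x + h * a \<in> X" using xy ab Oc X by (simp add: omodule_add omodule_mult_left)
  show "y * t * e + b * h \<in> Y" using xy ab Oc Y by (simp add: omodule_add omodule_mult_right)
qed

text \<open>The inverse of \<open>1 - z\<close> for nilpotent \<open>z = r h\<close> is the geometric sum \<open>\<Sum>j<m. z\<^sup>j\<close>.\<close>

lemma idempotent_diff_nilpotent_unit:
  assumes h: "h \<in> Oc" "[h * h = h] (mod\<^sub>I E)" and "r \<in> Oc" and nil: "[(r * h) ^ m = 0] (mod\<^sub>I E)"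
  obtains w where "w \<in> Oc" "[(h - r * h) * w = h] (mod\<^sub>I E)"
proof
  define z where "z = r * h"
  define w where "w = (\<Sum>j<m. z ^ j)"
  show "w \<in> Oc" unfolding w_def z_def using \<open>r \<in> Oc\<close> h(1) by (intro sum_mem power_mem mult_mem)
  have "[z = h * z] (mod\<^sub>I E)"
    using cong_mult_left[OF \<open>r \<in> Oc\<close> cong_sym[OF h(2)]] unfolding z_def by (simp add: ac_simps)
  then have "[(h - z) * w = (h - h * z) * w] (mod\<^sub>I E)"
    by (intro cong_mult_right \<open>w \<in> Oc\<close> cong_diff cong_refl)
  also have "(h - h * z) * w = h * ((1 - z) * w)" by (simp add: algebra_simps)
  also have "(1 - z) * w = 1 - z ^ m"
    using power_diff_1_eq[of z m] unfolding w_def by (simp add: algebra_simps)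
  also have "h * (1 - z ^ m) = h - h * z ^ m" by (simp add: algebra_simps)
  also have "[\<dots> = h - h * 0] (mod\<^sub>I E)"
    using nil unfolding z_def by (intro cong_diff cong_refl cong_mult_left h(1))
  finally show "[(h - r * h) * w = h] (mod\<^sub>I E)" unfolding z_def by simp
qed

end

section \<open>Residue rings of an order are finite\<close>

lemma rat_common_denominator:
  fixes q :: "nat \<Rightarrow> rat"
  obtains L :: int where "L > 0" "\<And>i. i < n \<Longrightarrow> q i * of_int L \<in> \<int>"
proof
  define den where "den i = snd (quotient_of (q i))" for i
  have den_pos: "den i > 0" for i unfolding den_def using quotient_of_denom_pos' .
  show "(\<Prod>i<n. den i) > 0" using den_pos by (simp add: prod_pos)
  fix i assume "i < n"
  have "q i * of_int (den i) = of_int (fst (quotient_of (q i)))"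
    unfolding den_def using den_pos[of i] quotient_of_div[of "q i"]
    by (metis (no_types) den_def nonzero_eq_divide_eq of_int_0_less_iff order_less_irrefl prod.collapse)
  moreover have "(\<Prod>i<n. den i) = den i * (\<Prod>j\<in>{..<n} - {i}. den j)"
    using \<open>i < n\<close> by (subst prod.remove[of _ i]) auto
  ultimately show "q i * of_int (\<Prod>i<n. den i) \<in> \<int>"
    by (simp add: mult.assoc[symmetric] Ints_mult Ints_prod del: of_int_prod)
qed

locale nf_order =
  fixes Oc :: "'a::field_char_0 set"
  assumes order: "nf_is_order Oc"

sublocale nf_order \<subseteq> field_subring
  using field_subring_order[OF order] .

context nf_order
begin

lemma Z_basis:
  obtains n b where "\<forall>x. \<exists>c::nat \<Rightarrow> rat. x = (\<Sum>i<n. of_rat (c i) * b i)"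
    and "Oc = {(\<Sum>i<n. of_int (c i) * b i) | c::nat \<Rightarrow> int. True}"
  using order unfolding nf_is_order_def by blast

lemma exists_denominator: "\<exists>L::int. L > 0 \<and> of_int L * x \<in> Oc"
proof -
  obtain n b where span: "\<forall>x. \<exists>c::nat \<Rightarrow> rat. x = (\<Sum>i<n. of_rat (c i) * b i)"
    and Oc: "Oc = {(\<Sum>i<n. of_int (c i) * b i) | c::nat \<Rightarrow> int. True}"
    by (rule Z_basis)
  obtain q where x: "x = (\<Sum>i<n. of_rat (q i) * b i)" using span by blast
  obtain L :: int where L: "L > 0" "\<And>i. i < n \<Longrightarrow> q i * of_int L \<in> \<int>"
    using rat_common_denominator[of n q] by metis
  have "\<forall>i. \<exists>z::int. i < n \<longrightarrow> q i * of_int L = of_int z" using L(2) Ints_cases by metis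
  then obtain k :: "nat \<Rightarrow> int" where k: "\<And>i. i < n \<Longrightarrow> q i * of_int L = of_int (k i)" by metis
  have "of_int L * x = (\<Sum>i<n. of_rat (q i * of_int L) * b i)"
    unfolding x by (simp add: sum_distrib_left of_rat_mult algebra_simps)
  also have "\<dots> = (\<Sum>i<n. of_int (k i) * b i)" using k by (intro sum.cong) auto
  finally have "of_int L * x \<in> Oc" unfolding Oc by blast
  with L(1) show ?thesis by blast
qed

lemma ideal_contains_pos_int:
  assumes I: "nf_integral_ideal Oc I" and "I \<noteq> {0}"
  obtains c :: int where "c > 0" "of_int c \<in> I"
proof -
  obtain d where d: "d \<in> I" "d \<noteq> 0" using assms ideal_zero[OF I] by blast
  obtain L :: int where L: "L > 0" "of_int L * inverse d \<in> Oc" using exists_denominator by blast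
  moreover have "of_int L * inverse d * d = of_int L" using d(2) by simp
  ultimately show ?thesis using ideal_mult_left[OF I L(2) d(1)] that by metis
qed

lemma finite_residue_system:
  assumes I: "nf_integral_ideal Oc I" and "I \<noteq> {0}"
  obtains R where "finite R" "\<And>x. x \<in> Oc \<Longrightarrow> \<exists>y\<in>R. [x = y] (mod\<^sub>I I)"
proof -
  obtain c :: int where c: "c > 0" "of_int c \<in> I" using ideal_contains_pos_int[OF assms] .
  obtain n b where Oc: "Oc = {(\<Sum>i<n. of_int (k i) * b i) | k::nat \<Rightarrow> int. True}"
    by (rule Z_basis)
  define R where "R = (\<lambda>k. \<Sum>i<n. of_int (k i) * b i) ` ({..<n} \<rightarrow>\<^sub>E {0..<c})"
  have "finite R" unfolding R_def by (intro finite_imageI finite_PiE) auto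
  moreover have "\<exists>y\<in>R. [x = y] (mod\<^sub>I I)" if "x \<in> Oc" for x
  proof -
    obtain k where x: "x = (\<Sum>i<n. of_int (k i) * b i)" using \<open>x \<in> Oc\<close> Oc by blast
    define y where "y = (\<Sum>i<n. of_int (k i mod c) * b i)"
    have "y \<in> R" unfolding R_def y_def using c(1)
      by (intro image_eqI[of _ _ "restrict (\<lambda>i. k i mod c) {..<n}"]) auto
    have "x - y = of_int c * (\<Sum>i<n. of_int (k i div c) * b i)"
      unfolding x y_def sum_subtractf[symmetric] sum_distrib_left
    proof (rule sum.cong)
      fix i
      have "(of_int (k i) :: 'a) = of_int (c * (k i div c) + k i mod c)" by simp
      then show "of_int (k i) * b i - of_int (k i mod c) * b i = of_int c * (of_int (k i div c) * b i)"
        by (simp only: of_int_add of_int_mult) (simp add: algebra_simps)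
    qed simp
    moreover have "(\<Sum>i<n. of_int (k i div c) * b i) \<in> Oc"
      unfolding Oc by (intro CollectI exI[of _ "\<lambda>i. k i div c"]) simp
    ultimately have "[x = y] (mod\<^sub>I I)"
      unfolding ideal_cong_def using ideal_mult_right[OF I _ c(2)] by simp
    with \<open>y \<in> R\<close> show ?thesis by blast
  qed
  ultimately show ?thesis using that by blast
qed

lemma residues_pigeonhole:
  fixes f :: "nat \<Rightarrow> 'a"
  assumes I: "nf_integral_ideal Oc I" and "I \<noteq> {0}" and f: "\<And>k. f k \<in> Oc"
  obtains i j where "i < j" "[f j = f i] (mod\<^sub>I I)"
proof -
  interpret ideal_congruence Oc I by unfold_locales (rule I)
  obtain R where "finite R" and "\<And>x. x \<in> Oc \<Longrightarrow> \<exists>y\<in>R. [x = y] (mod\<^sub>I I)"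
    using finite_residue_system[OF assms(1,2)] by blast
  then have "\<forall>k. \<exists>y. y \<in> R \<and> [f k = y] (mod\<^sub>I I)" using f by blast
  then obtain r where r: "\<And>k. r k \<in> R" "\<And>k. [f k = r k] (mod\<^sub>I I)" by metis
  have "\<not> inj r"
  proof
    assume "inj r"
    then have "infinite (range r)" using finite_imageD[of r UNIV] infinite_UNIV_nat by auto
    moreover have "range r \<subseteq> R" using r(1) by auto
    ultimately show False using \<open>finite R\<close> finite_subset by auto
  qed
  then obtain i j where "i \<noteq> j" "r i = r j" unfolding inj_def by blast
  have "[f j = f i] (mod\<^sub>I I)" "[f i = f j] (mod\<^sub>I I)"
    using r(2)[of i] r(2)[of j] cong_sym[OF r(2)[of i]] cong_sym[OF r(2)[of j]] \<open>r i = r j\<close>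
    by (metis cong_trans)+
  with \<open>i \<noteq> j\<close> that show ?thesis by (cases "i < j") (auto simp: not_less_iff_gr_or_eq)
qed

lemma power_idempotent_mod:
  assumes E: "nf_integral_ideal Oc E" and "E \<noteq> {0}" and r: "r \<in> Oc"
  obtains m where "m \<ge> 1" "[r ^ m * r ^ m = r ^ m] (mod\<^sub>I E)"
proof -
  interpret ideal_congruence Oc E by unfold_locales (rule E)
  obtain i j where "i < j" and ij: "[r ^ j = r ^ i] (mod\<^sub>I E)"
    using residues_pigeonhole[OF assms(1,2), of "\<lambda>k. r ^ k"] power_mem[OF r] by blast
  define p where "p = j - i"
  have "p > 0" "j = i + p" using \<open>i < j\<close> unfolding p_def by auto
  have periodic: "[r ^ (t + s * p) = r ^ t] (mod\<^sub>I E)" if "t \<ge> i" for t s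
  proof (induction s)
    case (Suc s)
    have "r ^ (t + Suc s * p) = r ^ (t + s * p - i) * r ^ j"
      using that \<open>j = i + p\<close> by (simp add: power_add[symmetric] algebra_simps)
    also have "[\<dots> = r ^ (t + s * p - i) * r ^ i] (mod\<^sub>I E)"
      by (intro cong_mult_left power_mem r ij)
    also have "r ^ (t + s * p - i) * r ^ i = r ^ (t + s * p)"
      using that by (simp add: power_add[symmetric])
    also note Suc
    finally show ?case .
  qed simp
  define m where "m = (i + 1) * p"
  have "(i + 1) * 1 \<le> (i + 1) * p" using \<open>p > 0\<close> by (intro mult_le_mono2) simp
  then have "m \<ge> 1" "m \<ge> i" unfolding m_def by simp_all
  have "r ^ m * r ^ m = r ^ (m + (i + 1) * p)" by (simp add: m_def power_add)
  also have "[\<dots> = r ^ m] (mod\<^sub>I E)" using periodic[OF \<open>m \<ge> i\<close>] .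
  finally show ?thesis using \<open>m \<ge> 1\<close> that by blast
qed

section \<open>Idempotents modulo a nonzero ideal\<close>

lemma idempotent_split:
  assumes D: "nf_integral_ideal Oc D" "D \<noteq> {0}"
    and g: "g \<in> Oc" "[g * g = g] (mod\<^sub>I D)" and r: "r \<in> Oc" "[r * g = r] (mod\<^sub>I D)"
  obtains e h t w where "e \<in> Oc" "h \<in> Oc" "t \<in> Oc" "w \<in> Oc" "e = r * t" "g = e + h"
    "[e * e = e] (mod\<^sub>I D)" "[h * h = h] (mod\<^sub>I D)" "[e * h = 0] (mod\<^sub>I D)"
    "[(g - r) * h * w = h] (mod\<^sub>I D)"
proof -
  interpret ideal_congruence Oc D by unfold_locales (rule D(1))
  obtain m where m: "m \<ge> 1" "[r ^ m * r ^ m = r ^ m] (mod\<^sub>I D)"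
    using power_idempotent_mod[OF D r(1)] .
  define e where "e = r ^ m"
  define t where "t = r ^ (m - 1)"
  define h where "h = g - e"
  have ert: "e = r * t" unfolding e_def t_def using m(1) by (simp add: power_eq_if)
  have Oc: "e \<in> Oc" "t \<in> Oc" "h \<in> Oc"
    unfolding e_def t_def h_def using g(1) r(1) by (auto intro: power_mem diff_mem)
  have ee: "[e * e = e] (mod\<^sub>I D)" using m(2) unfolding e_def .
  have "[e * g = e] (mod\<^sub>I D)"
    unfolding ert using cong_mult_left[OF Oc(2) r(2)] by (simp add: ac_simps)
  from idempotent_complement[OF g(1) Oc(1) g(2) ee this]
  have hh: "[h * h = h] (mod\<^sub>I D)" and gh: "[g * h = h] (mod\<^sub>I D)" and eh: "[e * h = 0] (mod\<^sub>I D)"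
    unfolding h_def by blast+
  have "(r * h) ^ m = e * h ^ m" unfolding e_def by (simp add: power_mult_distrib)
  also have "[\<dots> = e * h] (mod\<^sub>I D)" by (intro cong_mult_left Oc idempotent_power_cong hh m(1))
  finally obtain w where "w \<in> Oc" and hw: "[(h - r * h) * w = h] (mod\<^sub>I D)"
    using idempotent_diff_nilpotent_unit[OF Oc(3) hh r(1)] eh cong_trans by blast
  have "(g - r) * h * w = (g * h - r * h) * w" by algebra
  also have "[\<dots> = (h - r * h) * w] (mod\<^sub>I D)" by (intro cong_mult_right \<open>w \<in> Oc\<close> cong_diff gh cong_refl)
  finally have "[(g - r) * h * w = h] (mod\<^sub>I D)" using hw by (rule cong_trans)
  with Oc \<open>w \<in> Oc\<close> ert ee hh eh that show ?thesis unfolding h_def by simp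
qed

text \<open>Split off the component on which the last product is a unit and recurse on the
  complementary idempotent.\<close>

lemma single_product_mod:
  fixes k :: nat and x y :: "nat \<Rightarrow> 'a"
  assumes D: "nf_integral_ideal Oc D" "D \<noteq> {0}" and X: "omodule Oc X" and Y: "omodule Oc Y"
    and XY: "\<And>a b. a \<in> X \<Longrightarrow> b \<in> Y \<Longrightarrow> a * b \<in> Oc"
  shows "g \<in> Oc \<Longrightarrow> [g * g = g] (mod\<^sub>I D) \<Longrightarrow> \<forall>i<k. x i \<in> X \<and> y i \<in> Y \<Longrightarrow>
    [(\<Sum>i<k. x i * y i) = g] (mod\<^sub>I D) \<Longrightarrow> \<exists>a\<in>X. \<exists>b\<in>Y. [a * b = g] (mod\<^sub>I D)"
proof (induction k arbitrary: g y)
  case 0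
  interpret ideal_congruence Oc D by unfold_locales (rule D(1))
  have "[0 * 0 = g] (mod\<^sub>I D)" using 0(4) by simp
  then show ?case using omodule_zero[OF X] omodule_zero[OF Y] by blast
next
  case (Suc k)
  interpret ideal_congruence Oc D by unfold_locales (rule D(1))
  note g = Suc.prems(1,2) and xy = Suc.prems(3)
  define y' where "y' i = y i * g" for i
  have y': "y' i \<in> Y" if "i < Suc k" for i unfolding y'_def using xy that g(1) omodule_mult_right[OF Y] by blast
  define r where "r = x k * y' k"
  have "x k * y k \<in> Oc" "r \<in> Oc" unfolding r_def using xy y' XY by auto
  have "[r * g = r] (mod\<^sub>I D)"
    using cong_mult_left[OF \<open>x k * y k \<in> Oc\<close> g(2)] unfolding r_def y'_def by (simp add: ac_simps)
  then obtain e h t w where Oc: "e \<in> Oc" "h \<in> Oc" "t \<in> Oc" "w \<in> Oc"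
    and "e = r * t" "g = e + h" and ee: "[e * e = e] (mod\<^sub>I D)" and hh: "[h * h = h] (mod\<^sub>I D)"
    and eh: "[e * h = 0] (mod\<^sub>I D)" and hw: "[(g - r) * h * w = h] (mod\<^sub>I D)"
    using idempotent_split[OF D g \<open>r \<in> Oc\<close>] by blast
  define y'' where "y'' i = y' i * (h * w)" for i
  have "\<forall>i<k. x i \<in> X \<and> y'' i \<in> Y"
    unfolding y''_def using xy y' omodule_mult_right[OF Y] mult_mem[OF Oc(2,4)] by simp
  moreover have "[(\<Sum>i<k. x i * y'' i) = h] (mod\<^sub>I D)"
  proof -
    have "(\<Sum>i<k. x i * y'' i) = ((\<Sum>i<Suc k. x i * y i) * g - r) * h * w"
      unfolding y''_def y'_def r_def by (simp add: sum_distrib_left sum_distrib_right algebra_simps)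
    also have "[\<dots> = (g * g - r) * h * w] (mod\<^sub>I D)"
      by (intro cong_mult_right cong_diff cong_refl Suc.prems(4) g(1) Oc(2,4))
    also have "[\<dots> = (g - r) * h * w] (mod\<^sub>I D)"
      by (intro cong_mult_right cong_diff cong_refl g(2) Oc(2,4))
    also note hw
    finally show ?thesis .
  qed
  ultimately obtain a' b' where a'b': "a' \<in> X" "b' \<in> Y" "[a' * b' = h] (mod\<^sub>I D)"
    using Suc.IH[OF Oc(2) hh] by blast
  then show ?case
    using orthogonal_idempotents_product[OF X Y XY Oc(1-3) _ y'[of k] \<open>e = r * t\<close>[unfolded r_def]
        ee hh eh] xy \<open>g = e + h\<close> by auto
qed

text \<open>If \<open>e = v\<^sup>m\<close> is idempotent mod \<open>D\<close>, then \<open>u = v e + 1 - e\<close> is \<open>v\<close> on the \<open>e\<close>-component, where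
  \<open>v\<close> is a unit, and \<open>1\<close> on the other one; since \<open>v\<close> is a unit mod \<open>M\<close>, \<open>e \<equiv> 1\<close> mod \<open>M\<close>.\<close>

lemma unit_mod_lift:
  assumes D: "nf_integral_ideal Oc D" "D \<noteq> {0}" and M: "nf_integral_ideal Oc M" and "D \<subseteq> M"
    and v: "v \<in> Oc" and w: "w \<in> Oc" and vw: "[v * w = 1] (mod\<^sub>I M)"
  obtains u u' where "u \<in> Oc" "u' \<in> Oc" "[u = v] (mod\<^sub>I M)" "[u * u' = 1] (mod\<^sub>I D)"
proof -
  interpret m: ideal_congruence Oc M by unfold_locales (rule M)
  obtain m where m: "m \<ge> 1" "[v ^ m * v ^ m = v ^ m] (mod\<^sub>I D)"
    using power_idempotent_mod[OF D v] .
  define e where "e = v ^ m"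
  define t where "t = v ^ (m - 1)"
  have et: "e = v * t" unfolding e_def t_def using m(1) by (simp add: power_eq_if)
  have "e \<in> Oc" "t \<in> Oc" unfolding e_def t_def using v by (auto intro: power_mem)
  define u where "u = v * e + 1 - e"
  define u' where "u' = t * e + 1 - e"
  have "u \<in> Oc" "u' \<in> Oc" unfolding u_def u'_def
    using \<open>e \<in> Oc\<close> \<open>t \<in> Oc\<close> v by (auto intro!: add_mem diff_mem mult_mem one_mem)
  define eps where "eps = e * e - e"
  have "eps \<in> D" using m(2) unfolding eps_def e_def ideal_cong_def .
  have "u * u' - 1 = eps * (2 + e - v - t)" unfolding u_def u'_def eps_def et by algebra
  moreover have "2 + e - v - t \<in> Oc"
    using \<open>e \<in> Oc\<close> \<open>t \<in> Oc\<close> v one_mem by (metis one_add_one add_mem diff_mem)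
  ultimately have "[u * u' = 1] (mod\<^sub>I D)"
    unfolding ideal_cong_def using ideal_mult_right[OF D(1) _ \<open>eps \<in> D\<close>] by simp
  have "[(v * w) ^ m = 1 ^ m] (mod\<^sub>I M)" using vw by (intro m.cong_power mult_mem v w one_mem)
  then have "1 - (v * w) ^ m \<in> M" using m.cong_sym unfolding ideal_cong_def by simp
  have "1 - e = (1 - e) * (1 - (v * w) ^ m) - w ^ m * eps"
    unfolding eps_def e_def by (simp add: power_mult_distrib algebra_simps)
  also have "\<dots> \<in> M"
  proof (rule ideal_diff[OF M])
    show "(1 - e) * (1 - (v * w) ^ m) \<in> M"
      using \<open>1 - (v * w) ^ m \<in> M\<close> \<open>e \<in> Oc\<close> by (intro ideal_mult_left[OF M] diff_mem one_mem)
    show "w ^ m * eps \<in> M"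
      using \<open>eps \<in> D\<close> \<open>D \<subseteq> M\<close> w by (intro ideal_mult_left[OF M] power_mem) auto
  qed
  finally have "u - v = (1 - v) * (1 - e) \<and> 1 - e \<in> M" unfolding u_def by (simp add: algebra_simps)
  then have "[u = v] (mod\<^sub>I M)"
    unfolding ideal_cong_def using ideal_mult_left[OF M] v one_mem diff_mem by metis
  with \<open>u \<in> Oc\<close> \<open>u' \<in> Oc\<close> \<open>[u * u' = 1] (mod\<^sub>I D)\<close> that show ?thesis by blast
qed

end

section \<open>Products and inverses of fractional ideals\<close>

lemma ideal_mult_induct [consumes 1, case_names zero prod add]:
  fixes A B :: "'a::field_char_0 set"
  assumes "z \<in> nf_ideal_mult A B" and "P 0"
    and "\<And>a b. a \<in> A \<Longrightarrow> b \<in> B \<Longrightarrow> P (a * b)" and "\<And>u v. P u \<Longrightarrow> P v \<Longrightarrow> P (u + v)"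
  shows "P z"
proof -
  obtain n :: nat and a b :: "nat \<Rightarrow> 'a" where z: "z = (\<Sum>i<n. a i * b i)" and ab: "\<forall>i<n. a i \<in> A \<and> b i \<in> B"
    using assms(1) unfolding nf_ideal_mult_def by blast
  have "P (\<Sum>i<m. a i * b i)" if "m \<le> n" for m
    using that by (induction m) (simp_all add: assms(2-4) ab)
  then show ?thesis using z by simp
qed

lemma ideal_mult_zero: "0 \<in> nf_ideal_mult A B"
  unfolding nf_ideal_mult_def by (intro CollectI exI[of _ 0]) simp

lemma mem_ideal_mult: "a \<in> A \<Longrightarrow> b \<in> B \<Longrightarrow> a * b \<in> nf_ideal_mult A B"
  unfolding nf_ideal_mult_def by (intro CollectI exI[of _ 1] exI[of _ "\<lambda>_. a"] exI[of _ "\<lambda>_. b"]) simp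

lemma ideal_mult_add_prod:
  fixes A B :: "'a::field_char_0 set"
  assumes "u \<in> nf_ideal_mult A B" "a \<in> A" "b \<in> B"
  shows "u + a * b \<in> nf_ideal_mult A B"
proof -
  obtain n :: nat and as bs :: "nat \<Rightarrow> 'a" where u: "u = (\<Sum>i<n. as i * bs i)" "\<forall>i<n. as i \<in> A \<and> bs i \<in> B"
    using assms(1) unfolding nf_ideal_mult_def by blast
  have "u + a * b = (\<Sum>i<Suc n. (as(n := a)) i * (bs(n := b)) i)" unfolding u by simp
  moreover have "\<forall>i<Suc n. (as(n := a)) i \<in> A \<and> (bs(n := b)) i \<in> B"
    using u(2) assms(2,3) by (simp add: less_Suc_eq)
  ultimately show ?thesis unfolding nf_ideal_mult_def by blast
qed

lemma ideal_mult_add: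
  assumes "u \<in> nf_ideal_mult A B" and "v \<in> nf_ideal_mult A B"
  shows "u + v \<in> nf_ideal_mult A B"
  using assms(2,1)
proof (induction arbitrary: u rule: ideal_mult_induct)
  case (add v w)
  then show ?case by (metis add.assoc)
qed (simp_all add: ideal_mult_add_prod)

lemma ideal_mult_least:
  assumes "0 \<in> S" "\<And>u v. u \<in> S \<Longrightarrow> v \<in> S \<Longrightarrow> u + v \<in> S"
    and "\<And>a b. a \<in> A \<Longrightarrow> b \<in> B \<Longrightarrow> a * b \<in> S"
  shows "nf_ideal_mult A B \<subseteq> S"
  using assms by (auto elim: ideal_mult_induct)

lemma ideal_mult_commute: "nf_ideal_mult A B = nf_ideal_mult B A"
proof -
  have "nf_ideal_mult X Y \<subseteq> nf_ideal_mult Y X" for X Y :: "'a set"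
  proof (rule ideal_mult_least)
    fix a b assume "a \<in> X" "b \<in> Y"
    then show "a * b \<in> nf_ideal_mult Y X" using mem_ideal_mult[of b Y a X] by (simp add: mult.commute)
  qed (auto intro: ideal_mult_zero ideal_mult_add)
  then show ?thesis by blast
qed

lemma ideal_mult_mono: "A \<subseteq> A' \<Longrightarrow> B \<subseteq> B' \<Longrightarrow> nf_ideal_mult A B \<subseteq> nf_ideal_mult A' B'"
  by (rule ideal_mult_least) (auto intro: ideal_mult_zero ideal_mult_add mem_ideal_mult)

lemma ideal_mult_assoc: "nf_ideal_mult (nf_ideal_mult A B) C = nf_ideal_mult A (nf_ideal_mult B C)"
proof -
  have le: "nf_ideal_mult (nf_ideal_mult X Y) Z \<subseteq> nf_ideal_mult X (nf_ideal_mult Y Z)"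
    for X Y Z :: "'a set"
  proof (rule ideal_mult_least)
    fix u c assume "u \<in> nf_ideal_mult X Y" "c \<in> Z"
    then show "u * c \<in> nf_ideal_mult X (nf_ideal_mult Y Z)"
      by (induction rule: ideal_mult_induct)
        (auto intro: ideal_mult_zero ideal_mult_add mem_ideal_mult simp: distrib_right mult.assoc)
  qed (auto intro: ideal_mult_zero ideal_mult_add)
  have "nf_ideal_mult A (nf_ideal_mult B C) = nf_ideal_mult (nf_ideal_mult C B) A"
    by (simp add: ideal_mult_commute)
  also have "\<dots> \<subseteq> nf_ideal_mult C (nf_ideal_mult B A)" by (rule le)
  also have "\<dots> = nf_ideal_mult (nf_ideal_mult A B) C" by (simp add: ideal_mult_commute)
  finally show ?thesis using le by blast
qed

lemma ideal_mult_left_commute: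
  "nf_ideal_mult A (nf_ideal_mult B C) = nf_ideal_mult B (nf_ideal_mult A C)"
  by (metis ideal_mult_assoc ideal_mult_commute)

lemmas ideal_mult_ac = ideal_mult_assoc ideal_mult_commute ideal_mult_left_commute

lemma omodule_ideal_mult: "omodule Oc B \<Longrightarrow> omodule Oc (nf_ideal_mult A B)"
  unfolding omodule_def[of Oc "nf_ideal_mult A B"]
proof (intro conjI ballI)
  fix r x assume B: "omodule Oc B" and "r \<in> Oc" "x \<in> nf_ideal_mult A B"
  from \<open>x \<in> nf_ideal_mult A B\<close> show "r * x \<in> nf_ideal_mult A B"
    by (induction rule: ideal_mult_induct)
      (auto intro: ideal_mult_zero ideal_mult_add mem_ideal_mult omodule_mult_left[OF B \<open>r \<in> Oc\<close>]
        simp: distrib_left mult.left_commute[of r])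
qed (auto intro: ideal_mult_zero ideal_mult_add)

lemma omodule_fractional: "nf_fractional_ideal Oc A \<Longrightarrow> omodule Oc A"
  unfolding nf_fractional_ideal_def omodule_def by blast

lemma fractional_integral: "nf_integral_ideal Oc A \<Longrightarrow> nf_fractional_ideal Oc A"
  unfolding nf_integral_ideal_def nf_fractional_ideal_def by (auto intro!: exI[of _ 1])

lemma invertibleI:
  "nf_fractional_ideal Oc A \<Longrightarrow> nf_fractional_ideal Oc B \<Longrightarrow> nf_ideal_mult A B = Oc \<Longrightarrow>
    nf_invertible Oc A"
  unfolding nf_invertible_def by blast

abbreviation ideal_inv :: "'a::field_char_0 set \<Rightarrow> 'a set \<Rightarrow> 'a set" where
  "ideal_inv Oc A \<equiv> nf_colon Oc A"

lemma mult_mem_ideal_inv: "x \<in> A \<Longrightarrow> y \<in> ideal_inv Oc A \<Longrightarrow> x * y \<in> Oc"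
  unfolding nf_colon_def by (auto simp: mult.commute)

context field_subring
begin

lemma omodule_self: "omodule Oc Oc"
  unfolding omodule_def by (auto intro: zero_mem add_mem mult_mem)

lemma ideal_mult_Oc_left:
  assumes "omodule Oc A"
  shows "nf_ideal_mult Oc A = A"
proof
  show "nf_ideal_mult Oc A \<subseteq> A"
    by (rule ideal_mult_least) (auto intro: omodule_zero[OF assms] omodule_add[OF assms]
        omodule_mult_left[OF assms])
  show "A \<subseteq> nf_ideal_mult Oc A" using mem_ideal_mult[OF one_mem] by fastforce
qed

lemma ideal_mult_Oc_Oc: "nf_ideal_mult Oc Oc = Oc"
  using ideal_mult_Oc_left[OF omodule_self] .

lemma fractional_ideal_mult:
  assumes "nf_fractional_ideal Oc A" "nf_fractional_ideal Oc B"
  shows "nf_fractional_ideal Oc (nf_ideal_mult A B)"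
proof -
  obtain la where "la \<noteq> 0" and la: "(\<lambda>x. la * x) ` A \<subseteq> Oc"
    using assms(1) unfolding nf_fractional_ideal_def by blast
  obtain lb where "lb \<noteq> 0" and lb: "(\<lambda>x. lb * x) ` B \<subseteq> Oc"
    using assms(2) unfolding nf_fractional_ideal_def by blast
  have "la * lb * z \<in> Oc" if "z \<in> nf_ideal_mult A B" for z
    using that
  proof (induction rule: ideal_mult_induct)
    case (prod a b)
    then have "la * a \<in> Oc" "lb * b \<in> Oc" using la lb by auto
    then have "(la * a) * (lb * b) \<in> Oc" by (rule mult_mem)
    then show ?case by (simp add: ac_simps)
  next
    case (add u v)
    then show ?case by (simp add: distrib_left add_mem)
  qed (simp add: zero_mem)
  then have "(\<lambda>x. la * lb * x) ` nf_ideal_mult A B \<subseteq> Oc" by blast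
  moreover have "la * lb \<noteq> 0" using \<open>la \<noteq> 0\<close> \<open>lb \<noteq> 0\<close> by simp
  moreover have "omodule Oc (nf_ideal_mult A B)"
    using omodule_ideal_mult[OF omodule_fractional[OF assms(2)]] .
  ultimately show ?thesis unfolding nf_fractional_ideal_def omodule_def by blast
qed

lemma integral_ideal_mult:
  assumes "nf_integral_ideal Oc A" "nf_integral_ideal Oc B"
  shows "nf_integral_ideal Oc (nf_ideal_mult A B)"
proof -
  have "nf_ideal_mult A B \<subseteq> Oc"
    using ideal_subset[OF assms(1)] ideal_subset[OF assms(2)]
    by (intro ideal_mult_least) (auto intro: zero_mem add_mem mult_mem)
  then show ?thesis using omodule_ideal_mult[OF omodule_integral_ideal[OF assms(2)], of A]
    unfolding nf_integral_ideal_def omodule_def by blast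
qed

lemma ideal_inv_unique:
  assumes "nf_fractional_ideal Oc A" "nf_fractional_ideal Oc B" and AB: "nf_ideal_mult A B = Oc"
  shows "ideal_inv Oc A = B"
proof
  show "B \<subseteq> ideal_inv Oc A"
  proof
    fix x assume "x \<in> B"
    have "a * x \<in> Oc" if "a \<in> A" for a using mem_ideal_mult[OF that \<open>x \<in> B\<close>] AB by simp
    then show "x \<in> ideal_inv Oc A" unfolding nf_colon_def by (simp add: mult.commute)
  qed
  show "ideal_inv Oc A \<subseteq> B"
  proof
    fix x assume x: "x \<in> ideal_inv Oc A"
    have "1 \<in> nf_ideal_mult A B" using AB one_mem by simp
    then have "x * 1 \<in> B"
    proof (induction rule: ideal_mult_induct)
      case (prod a b)
      then have "(x * a) * b \<in> B"
        using x omodule_mult_left[OF omodule_fractional[OF assms(2)]] unfolding nf_colon_def by blast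
      then show ?case by (simp add: mult.assoc)
    qed (simp_all add: distrib_left omodule_zero[OF omodule_fractional[OF assms(2)]]
        omodule_add[OF omodule_fractional[OF assms(2)]])
    then show "x \<in> B" by simp
  qed
qed

lemma invertible_ideal_inv:
  assumes "nf_invertible Oc A"
  shows "nf_fractional_ideal Oc (ideal_inv Oc A)" "nf_ideal_mult A (ideal_inv Oc A) = Oc"
    "nf_ideal_mult (ideal_inv Oc A) A = Oc"
proof -
  obtain B where "nf_fractional_ideal Oc A" "nf_fractional_ideal Oc B" "nf_ideal_mult A B = Oc"
    using assms unfolding nf_invertible_def by blast
  with ideal_inv_unique[OF this] show "nf_fractional_ideal Oc (ideal_inv Oc A)"
    "nf_ideal_mult A (ideal_inv Oc A) = Oc" "nf_ideal_mult (ideal_inv Oc A) A = Oc"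
    by (simp_all add: ideal_mult_commute)
qed

lemma invertible_ideal_mult:
  assumes "nf_invertible Oc A" "nf_invertible Oc B"
  shows "nf_invertible Oc (nf_ideal_mult A B)"
    "ideal_inv Oc (nf_ideal_mult A B) = nf_ideal_mult (ideal_inv Oc A) (ideal_inv Oc B)"
proof -
  note A = invertible_ideal_inv[OF assms(1)] and B = invertible_ideal_inv[OF assms(2)]
  have "nf_ideal_mult (nf_ideal_mult A B) (nf_ideal_mult (ideal_inv Oc A) (ideal_inv Oc B)) =
      nf_ideal_mult (nf_ideal_mult A (ideal_inv Oc A)) (nf_ideal_mult B (ideal_inv Oc B))"
    by (simp only: ideal_mult_ac)
  also have "\<dots> = Oc" using A B ideal_mult_Oc_Oc by simp
  finally have prod: "nf_ideal_mult (nf_ideal_mult A B) (nf_ideal_mult (ideal_inv Oc A) (ideal_inv Oc B)) = Oc" .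
  have "nf_fractional_ideal Oc (nf_ideal_mult A B)"
    using assms fractional_ideal_mult unfolding nf_invertible_def by blast
  moreover have "nf_fractional_ideal Oc (nf_ideal_mult (ideal_inv Oc A) (ideal_inv Oc B))"
    using A(1) B(1) by (rule fractional_ideal_mult)
  ultimately show "nf_invertible Oc (nf_ideal_mult A B)"
    "ideal_inv Oc (nf_ideal_mult A B) = nf_ideal_mult (ideal_inv Oc A) (ideal_inv Oc B)"
    using invertibleI ideal_inv_unique prod by blast+
qed

lemma ideal_inv_invertible:
  assumes "nf_invertible Oc A"
  shows "nf_invertible Oc (ideal_inv Oc A)" "ideal_inv Oc (ideal_inv Oc A) = A"
proof -
  have "nf_fractional_ideal Oc A" using assms unfolding nf_invertible_def by blast
  note inv = invertible_ideal_inv[OF assms]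
  show "nf_invertible Oc (ideal_inv Oc A)" using invertibleI[OF inv(1) \<open>nf_fractional_ideal Oc A\<close> inv(3)] .
  show "ideal_inv Oc (ideal_inv Oc A) = A"
    using ideal_inv_unique[OF inv(1) \<open>nf_fractional_ideal Oc A\<close> inv(3)] .
qed

lemma invertible_Oc: "nf_invertible Oc Oc" "ideal_inv Oc Oc = Oc"
  using invertibleI ideal_inv_unique fractional_integral[OF integral_ideal_self] ideal_mult_Oc_Oc
  by blast+

lemma colon_eq_mult_ideal_inv:
  assumes A: "omodule Oc A" and B: "nf_invertible Oc B"
  shows "nf_colon A B = nf_ideal_mult A (ideal_inv Oc B)"
proof
  show "nf_colon A B \<subseteq> nf_ideal_mult A (ideal_inv Oc B)"
  proof
    fix x assume x: "x \<in> nf_colon A B"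
    have "1 \<in> nf_ideal_mult B (ideal_inv Oc B)" using invertible_ideal_inv(2)[OF B] one_mem by simp
    then have "x * 1 \<in> nf_ideal_mult A (ideal_inv Oc B)"
    proof (induction rule: ideal_mult_induct)
      case (prod a b)
      then have "(x * a) * b \<in> nf_ideal_mult A (ideal_inv Oc B)"
        using x unfolding nf_colon_def by (blast intro: mem_ideal_mult)
      then show ?case by (simp add: mult.assoc)
    qed (auto intro: ideal_mult_zero ideal_mult_add simp: distrib_left)
    then show "x \<in> nf_ideal_mult A (ideal_inv Oc B)" by simp
  qed
  show "nf_ideal_mult A (ideal_inv Oc B) \<subseteq> nf_colon A B"
  proof (rule ideal_mult_least)
    fix a c assume "a \<in> A" "c \<in> ideal_inv Oc B"
    then show "a * c \<in> nf_colon A B"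
      unfolding nf_colon_def using omodule_mult_right[OF A] by (auto simp: mult.assoc)
  qed (auto simp: nf_colon_def distrib_right omodule_zero[OF A] omodule_add[OF A])
qed


lemma invertible_nonzero:
  assumes "nf_invertible Oc I"
  shows "I \<noteq> {0}"
proof
  assume "I = {0}"
  then have "nf_ideal_mult I (ideal_inv Oc I) \<subseteq> {0}" by (intro ideal_mult_least) auto
  moreover have "1 \<in> nf_ideal_mult I (ideal_inv Oc I)" using invertible_ideal_inv(2)[OF assms] one_mem by simp
  ultimately show False by auto
qed

end

section \<open>The groups of ideals coprime to an ideal and of principal ideals\<close>

definition coprime_invertible :: "'a::field_char_0 set \<Rightarrow> 'a set \<Rightarrow> 'a set \<Rightarrow> bool" where
  "coprime_invertible Oc C I \<longleftrightarrow>
     nf_integral_ideal Oc I \<and> nf_invertible Oc I \<and> nf_ideal_sum I C = Oc"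

context field_subring
begin

lemma coprime_iff_one_mem:
  assumes A: "nf_integral_ideal Oc A" and C: "nf_integral_ideal Oc C"
  shows "nf_ideal_sum A C = Oc \<longleftrightarrow> 1 \<in> nf_ideal_sum A C"
proof
  assume "1 \<in> nf_ideal_sum A C"
  then obtain a c where ac: "a \<in> A" "c \<in> C" "1 = a + c" unfolding nf_ideal_sum_def by blast
  show "nf_ideal_sum A C = Oc"
  proof
    show "nf_ideal_sum A C \<subseteq> Oc"
      unfolding nf_ideal_sum_def using ideal_subset[OF A] ideal_subset[OF C] add_mem by blast
    show "Oc \<subseteq> nf_ideal_sum A C"
    proof
      fix x assume "x \<in> Oc"
      have "x = x * a + x * c" using ac(3) by (metis distrib_left mult.right_neutral)
      moreover have "x * a \<in> A" "x * c \<in> C"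
        using ideal_mult_left[OF A \<open>x \<in> Oc\<close> ac(1)] ideal_mult_left[OF C \<open>x \<in> Oc\<close> ac(2)] .
      ultimately show "x \<in> nf_ideal_sum A C" unfolding nf_ideal_sum_def by blast
    qed
  qed
qed (use one_mem in simp)

lemma coprime_mono:
  assumes "nf_integral_ideal Oc A" "nf_integral_ideal Oc M" "D \<subseteq> M" "nf_ideal_sum A D = Oc"
  shows "nf_ideal_sum A M = Oc"
proof -
  have "1 \<in> nf_ideal_sum A D" using assms(4) one_mem by simp
  then have "1 \<in> nf_ideal_sum A M" using assms(3) unfolding nf_ideal_sum_def by blast
  then show ?thesis using coprime_iff_one_mem[OF assms(1,2)] by blast
qed

lemma coprime_ideal_mult:
  assumes A: "nf_integral_ideal Oc A" and B: "nf_integral_ideal Oc B" and C: "nf_integral_ideal Oc C"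
    and "nf_ideal_sum A C = Oc" "nf_ideal_sum B C = Oc"
  shows "nf_ideal_sum (nf_ideal_mult A B) C = Oc"
proof -
  obtain a c where ac: "a \<in> A" "c \<in> C" "1 = a + c"
    using assms(4) one_mem unfolding nf_ideal_sum_def by blast
  obtain b d where bd: "b \<in> B" "d \<in> C" "1 = b + d"
    using assms(5) one_mem unfolding nf_ideal_sum_def by blast
  have "1 = a * b + (a * d + c * b + c * d)"
    using ac(3) bd(3) by (metis add.assoc distrib_left distrib_right mult.right_neutral)
  moreover have "a * b \<in> nf_ideal_mult A B" using ac bd by (blast intro: mem_ideal_mult)
  moreover have "a * d + c * b + c * d \<in> C"
    using ac bd ideal_subset[OF A] ideal_subset[OF B] ideal_subset[OF C]
    by (intro ideal_add[OF C] ideal_mult_left[OF C] ideal_mult_right[OF C]) auto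
  ultimately have "1 \<in> nf_ideal_sum (nf_ideal_mult A B) C" unfolding nf_ideal_sum_def by blast
  then show ?thesis using coprime_iff_one_mem[OF integral_ideal_mult[OF A B] C] by blast
qed

lemma coprime_Oc: "nf_integral_ideal Oc C \<Longrightarrow> nf_ideal_sum Oc C = Oc"
  using coprime_iff_one_mem[OF integral_ideal_self] one_mem ideal_zero[of Oc C]
  unfolding nf_ideal_sum_def by force

lemma coprime_invertible_mult:
  "nf_integral_ideal Oc C \<Longrightarrow> coprime_invertible Oc C A \<Longrightarrow> coprime_invertible Oc C B \<Longrightarrow>
    coprime_invertible Oc C (nf_ideal_mult A B)"
  unfolding coprime_invertible_def
  using integral_ideal_mult invertible_ideal_mult(1) coprime_ideal_mult by blast

lemma coprime_invertible_Oc: "nf_integral_ideal Oc C \<Longrightarrow> coprime_invertible Oc C Oc"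
  unfolding coprime_invertible_def using integral_ideal_self invertible_Oc(1) coprime_Oc by blast

text \<open>Since \<open>B\<^sub>1\<close> is invertible, \<open>(A\<^sub>1 : B\<^sub>1) = A\<^sub>1 B\<^sub>1\<^sup>-\<^sup>1\<close>, and then \<open>A\<^sub>1 = A B\<^sub>1\<close> is invertible as well.\<close>

lemma Jstar_iff:
  assumes "nf_integral_ideal Oc C"
  shows "A \<in> nf_Jstar Oc C \<longleftrightarrow>
    (\<exists>A1 B1. coprime_invertible Oc C A1 \<and> coprime_invertible Oc C B1 \<and>
       A = nf_ideal_mult A1 (ideal_inv Oc B1))"
proof
  assume "A \<in> nf_Jstar Oc C"
  then obtain A1 B1 where A: "nf_invertible Oc A" "A = nf_colon A1 B1"
    and A1: "nf_integral_ideal Oc A1" "nf_ideal_sum A1 C = Oc"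
    and B1: "coprime_invertible Oc C B1"
    unfolding nf_Jstar_def nf_frac_coprime_def coprime_invertible_def by blast
  have B1': "nf_invertible Oc B1" using B1 unfolding coprime_invertible_def by blast
  have A': "A = nf_ideal_mult A1 (ideal_inv Oc B1)"
    using A(2) colon_eq_mult_ideal_inv[OF omodule_integral_ideal[OF A1(1)] B1'] by simp
  have "nf_ideal_mult A B1 = nf_ideal_mult A1 (nf_ideal_mult (ideal_inv Oc B1) B1)"
    unfolding A' by (simp add: ideal_mult_assoc)
  also have "\<dots> = A1"
    using invertible_ideal_inv(3)[OF B1'] ideal_mult_Oc_left[OF omodule_integral_ideal[OF A1(1)]]
    by (simp add: ideal_mult_commute)
  finally have "nf_invertible Oc A1" using invertible_ideal_mult(1)[OF A(1) B1'] by simp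
  then show "\<exists>A1 B1. coprime_invertible Oc C A1 \<and> coprime_invertible Oc C B1 \<and>
      A = nf_ideal_mult A1 (ideal_inv Oc B1)"
    using A1 B1 A' unfolding coprime_invertible_def by blast
next
  assume "\<exists>A1 B1. coprime_invertible Oc C A1 \<and> coprime_invertible Oc C B1 \<and>
      A = nf_ideal_mult A1 (ideal_inv Oc B1)"
  then obtain A1 B1 where A1: "coprime_invertible Oc C A1" and B1: "coprime_invertible Oc C B1"
    and A: "A = nf_ideal_mult A1 (ideal_inv Oc B1)" by blast
  have "nf_invertible Oc A1" "nf_invertible Oc B1" "nf_integral_ideal Oc A1"
    using A1 B1 unfolding coprime_invertible_def by blast+
  then have "nf_invertible Oc A"
    unfolding A by (intro invertible_ideal_mult(1) ideal_inv_invertible(1))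
  moreover have "A = nf_colon A1 B1"
    using A colon_eq_mult_ideal_inv[OF omodule_integral_ideal] \<open>nf_integral_ideal Oc A1\<close>
      \<open>nf_invertible Oc B1\<close> by simp
  ultimately show "A \<in> nf_Jstar Oc C"
    using A1 B1 unfolding nf_Jstar_def nf_frac_coprime_def coprime_invertible_def by blast
qed

lemma coprime_invertible_in_Jstar:
  assumes "nf_integral_ideal Oc C" "coprime_invertible Oc C I"
  shows "I \<in> nf_Jstar Oc C"
proof -
  have "I = nf_ideal_mult I (ideal_inv Oc Oc)"
    using ideal_mult_Oc_left[OF omodule_integral_ideal] assms(2) invertible_Oc(2)
    unfolding coprime_invertible_def by (simp add: ideal_mult_commute)
  then show ?thesis using Jstar_iff[OF assms(1)] assms coprime_invertible_Oc by blast
qed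

lemma Jstar_mult:
  assumes C: "nf_integral_ideal Oc C" and "A \<in> nf_Jstar Oc C" "B \<in> nf_Jstar Oc C"
  shows "nf_ideal_mult A B \<in> nf_Jstar Oc C"
proof -
  obtain A1 A2 B1 B2 where A: "coprime_invertible Oc C A1" "coprime_invertible Oc C A2"
    "A = nf_ideal_mult A1 (ideal_inv Oc A2)" and B: "coprime_invertible Oc C B1"
    "coprime_invertible Oc C B2" "B = nf_ideal_mult B1 (ideal_inv Oc B2)"
    using assms(2,3) unfolding Jstar_iff[OF C] by blast
  have "nf_ideal_mult A B =
      nf_ideal_mult (nf_ideal_mult A1 B1) (nf_ideal_mult (ideal_inv Oc A2) (ideal_inv Oc B2))"
    unfolding A(3) B(3) by (simp only: ideal_mult_ac)
  also have "\<dots> = nf_ideal_mult (nf_ideal_mult A1 B1) (ideal_inv Oc (nf_ideal_mult A2 B2))"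
    using invertible_ideal_mult(2) A(2) B(2) unfolding coprime_invertible_def by simp
  finally show ?thesis
    unfolding Jstar_iff[OF C] using coprime_invertible_mult[OF C] A B by blast
qed

lemma Jstar_ideal_inv:
  assumes C: "nf_integral_ideal Oc C" and "A \<in> nf_Jstar Oc C"
  shows "ideal_inv Oc A \<in> nf_Jstar Oc C"
proof -
  obtain A1 A2 where A: "coprime_invertible Oc C A1" "coprime_invertible Oc C A2"
    "A = nf_ideal_mult A1 (ideal_inv Oc A2)"
    using assms(2) unfolding Jstar_iff[OF C] by blast
  have inv: "nf_invertible Oc A1" "nf_invertible Oc A2"
    using A unfolding coprime_invertible_def by blast+
  have "ideal_inv Oc A = nf_ideal_mult A2 (ideal_inv Oc A1)"
    unfolding A(3) using invertible_ideal_mult(2)[OF inv(1) ideal_inv_invertible(1)[OF inv(2)]]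
      ideal_inv_invertible(2)[OF inv(2)] by (simp add: ideal_mult_commute)
  then show ?thesis unfolding Jstar_iff[OF C] using A by blast
qed

lemma Jstar_mono:
  assumes "nf_integral_ideal Oc M" "D \<subseteq> M"
  shows "nf_Jstar Oc D \<subseteq> nf_Jstar Oc M"
  unfolding nf_Jstar_def nf_frac_coprime_def using coprime_mono[OF _ assms] by blast

lemma Jstar_fractional: "A \<in> nf_Jstar Oc C \<Longrightarrow> nf_fractional_ideal Oc A"
  unfolding nf_Jstar_def nf_invertible_def by blast

lemma comm_group_Jgroup:
  assumes C: "nf_integral_ideal Oc C"
  shows "comm_group (nf_Jgroup Oc C)"
proof (rule comm_groupI, simp_all add: nf_Jgroup_def)
  show "\<And>A B. A \<in> nf_Jstar Oc C \<Longrightarrow> B \<in> nf_Jstar Oc C \<Longrightarrow> nf_ideal_mult A B \<in> nf_Jstar Oc C"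
    using Jstar_mult[OF C] .
  show "Oc \<in> nf_Jstar Oc C" using coprime_invertible_in_Jstar[OF C coprime_invertible_Oc[OF C]] .
  show "\<And>A B D. nf_ideal_mult (nf_ideal_mult A B) D = nf_ideal_mult A (nf_ideal_mult B D)"
    by (rule ideal_mult_assoc)
  show "\<And>A B. nf_ideal_mult A B = nf_ideal_mult B A" by (rule ideal_mult_commute)
  show "\<And>A. A \<in> nf_Jstar Oc C \<Longrightarrow> nf_ideal_mult Oc A = A"
    using ideal_mult_Oc_left[OF omodule_fractional[OF Jstar_fractional]] by blast
  show "\<And>A. A \<in> nf_Jstar Oc C \<Longrightarrow> \<exists>B\<in>nf_Jstar Oc C. nf_ideal_mult B A = Oc"
    using Jstar_ideal_inv[OF C] invertible_ideal_inv(3) unfolding nf_Jstar_def by blast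
qed

lemma inv_Jgroup:
  assumes C: "nf_integral_ideal Oc C" and A: "A \<in> nf_Jstar Oc C"
  shows "inv\<^bsub>nf_Jgroup Oc C\<^esub> A = ideal_inv Oc A"
proof -
  interpret comm_group "nf_Jgroup Oc C" by (rule comm_group_Jgroup[OF C])
  have "nf_ideal_mult (ideal_inv Oc A) A = Oc"
    using A invertible_ideal_inv(3) unfolding nf_Jstar_def by blast
  then show ?thesis
    using inv_equality[of "ideal_inv Oc A" A] Jstar_ideal_inv[OF C A] A by (simp add: nf_Jgroup_def)
qed

end

lemma principal_one: "nf_principal Oc 1 = Oc"
  unfolding nf_principal_def by simp

context field_subring
begin

lemma omodule_principal: "omodule Oc (nf_principal Oc a)"
  unfolding omodule_def nf_principal_def
proof (intro conjI ballI)
  show "0 \<in> (*) a ` Oc" using zero_mem by (metis image_eqI mult_zero_right)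
  fix x y assume "x \<in> (*) a ` Oc" "y \<in> (*) a ` Oc"
  then obtain u v where "u \<in> Oc" "v \<in> Oc" "x = a * u" "y = a * v" by blast
  then show "x + y \<in> (*) a ` Oc" using add_mem by (metis distrib_left image_eqI)
next
  fix r x assume "r \<in> Oc" "x \<in> (*) a ` Oc"
  then obtain u where "u \<in> Oc" "x = a * u" by blast
  moreover have "r * (a * u) = a * (r * u)" by (simp add: algebra_simps)
  ultimately show "r * x \<in> (*) a ` Oc" using mult_mem[OF \<open>r \<in> Oc\<close> \<open>u \<in> Oc\<close>] by blast
qed

lemma integral_principal: "a \<in> Oc \<Longrightarrow> nf_integral_ideal Oc (nf_principal Oc a)"
  using omodule_principal[of a] unfolding nf_integral_ideal_def omodule_def nf_principal_def
  by (auto intro: mult_mem)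

lemma fractional_principal:
  assumes "a \<noteq> 0"
  shows "nf_fractional_ideal Oc (nf_principal Oc a)"
proof -
  have "(\<lambda>x. inverse a * x) ` nf_principal Oc a \<subseteq> Oc"
    using assms unfolding nf_principal_def by (auto simp: mult.assoc[symmetric])
  then show ?thesis using omodule_principal[of a] assms unfolding nf_fractional_ideal_def omodule_def
    by (intro conjI exI[of _ "inverse a"]) auto
qed

lemma mem_principal_self: "a \<in> nf_principal Oc a"
  unfolding nf_principal_def using one_mem by (metis image_eqI mult_1_right)

lemma principal_mult:
  "nf_ideal_mult (nf_principal Oc a) (nf_principal Oc b) = nf_principal Oc (a * b)"
proof
  show "nf_ideal_mult (nf_principal Oc a) (nf_principal Oc b) \<subseteq> nf_principal Oc (a * b)"
  proof (rule ideal_mult_least)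
    fix x y assume "x \<in> nf_principal Oc a" "y \<in> nf_principal Oc b"
    then obtain u v where uv: "u \<in> Oc" "v \<in> Oc" "x = a * u" "y = b * v"
      unfolding nf_principal_def by blast
    have "x * y = (a * b) * (u * v)" using uv by (simp add: algebra_simps)
    then show "x * y \<in> nf_principal Oc (a * b)"
      unfolding nf_principal_def using mult_mem[OF uv(1,2)] by blast
  qed (simp_all add: omodule_zero[OF omodule_principal] omodule_add[OF omodule_principal])
  show "nf_principal Oc (a * b) \<subseteq> nf_ideal_mult (nf_principal Oc a) (nf_principal Oc b)"
  proof
    fix z assume "z \<in> nf_principal Oc (a * b)"
    then obtain u where "u \<in> Oc" "z = a * (b * u)" unfolding nf_principal_def by (auto simp: mult.assoc)
    moreover have "b * u \<in> nf_principal Oc b" unfolding nf_principal_def using \<open>u \<in> Oc\<close> by blast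
    ultimately show "z \<in> nf_ideal_mult (nf_principal Oc a) (nf_principal Oc b)"
      using mem_ideal_mult[OF mem_principal_self] by blast
  qed
qed

lemma invertible_principal:
  assumes "a \<noteq> 0"
  shows "nf_invertible Oc (nf_principal Oc a)"
    "ideal_inv Oc (nf_principal Oc a) = nf_principal Oc (inverse a)"
proof -
  have "nf_ideal_mult (nf_principal Oc a) (nf_principal Oc (inverse a)) = Oc"
    using principal_mult principal_one assms by simp
  moreover have "nf_fractional_ideal Oc (nf_principal Oc (inverse a))"
    using fractional_principal assms by simp
  ultimately show "nf_invertible Oc (nf_principal Oc a)"
    "ideal_inv Oc (nf_principal Oc a) = nf_principal Oc (inverse a)"
    using invertibleI ideal_inv_unique fractional_principal[OF assms] by blast+
qed

lemma mem_S_iff: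
  assumes M: "nf_integral_ideal Oc M"
  shows "s \<in> nf_S Oc M \<longleftrightarrow> s \<in> Oc \<and> (\<exists>r\<in>Oc. \<exists>m\<in>M. s * r + m = 1)"
proof -
  have "s \<in> Oc \<Longrightarrow> 1 \<in> nf_ideal_sum (nf_principal Oc s) M \<longleftrightarrow> (\<exists>r\<in>Oc. \<exists>m\<in>M. s * r + m = 1)"
    unfolding nf_ideal_sum_def nf_principal_def by (auto simp: eq_commute[of 1])
  then show ?thesis
    unfolding nf_S_def using coprime_iff_one_mem[OF integral_principal M] by blast
qed

lemma S_mult:
  assumes M: "nf_integral_ideal Oc M" and "s \<in> nf_S Oc M" "t \<in> nf_S Oc M"
  shows "s * t \<in> nf_S Oc M"
proof -
  obtain r m where s: "s \<in> Oc" "r \<in> Oc" "m \<in> M" "s * r + m = 1" using assms(2) mem_S_iff[OF M] by blast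
  obtain r' m' where t: "t \<in> Oc" "r' \<in> Oc" "m' \<in> M" "t * r' + m' = 1" using assms(3) mem_S_iff[OF M] by blast
  have "(s * t) * (r * r') + (m * (t * r') + (s * r) * m' + m * m') = (s * r + m) * (t * r' + m')"
    by (simp add: algebra_simps)
  also have "\<dots> = 1" using s(4) t(4) by simp
  finally have "(s * t) * (r * r') + (m * (t * r') + (s * r) * m' + m * m') = 1" .
  moreover have "m * (t * r') + (s * r) * m' + m * m' \<in> M"
    using s t ideal_subset[OF M] by (intro ideal_add[OF M] ideal_mult_left[OF M] ideal_mult_right[OF M]
        mult_mem) auto
  ultimately show ?thesis using mem_S_iff[OF M] mult_mem s t by blast
qed

lemma S_add:
  assumes M: "nf_integral_ideal Oc M" and "s \<in> nf_S Oc M" "x \<in> M"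
  shows "s + x \<in> nf_S Oc M"
proof -
  obtain r m where s: "s \<in> Oc" "r \<in> Oc" "m \<in> M" "s * r + m = 1" using assms(2) mem_S_iff[OF M] by blast
  have "(s + x) * r + (m - x * r) = 1" using s(4) by (simp add: algebra_simps)
  moreover have "m - x * r \<in> M" using s assms(3) by (intro ideal_diff[OF M] ideal_mult_right[OF M])
  moreover have "s + x \<in> Oc" using add_mem[OF s(1) ideal_subset[OF M assms(3)]] .
  ultimately show ?thesis using mem_S_iff[OF M] s(2) by blast
qed

lemma one_mem_S:
  assumes "nf_integral_ideal Oc M"
  shows "1 \<in> nf_S Oc M"
proof -
  have "1 * 1 + 0 = (1 :: 'a)" by simp
  then show ?thesis using mem_S_iff[OF assms] one_mem ideal_zero[OF assms] by blast
qed

lemma coprime_invertible_principal_S: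
  assumes M: "nf_integral_ideal Oc M" and "s \<in> nf_S Oc M" "s \<noteq> 0"
  shows "coprime_invertible Oc M (nf_principal Oc s)"
  using assms integral_principal invertible_principal(1) unfolding nf_S_def coprime_invertible_def
  by blast

lemma cong1_iff:
  assumes M: "nf_integral_ideal Oc M"
  shows "nf_cong1 Oc M \<alpha> \<longleftrightarrow> (\<exists>x\<in>M. \<exists>s\<in>nf_S Oc M. s \<noteq> 0 \<and> \<alpha> - 1 = x / s)"
proof
  assume "nf_cong1 Oc M \<alpha>"
  then have "\<alpha> - 1 \<in> nf_ideal_mult M (nf_localize Oc (nf_S Oc M))" unfolding nf_cong1_def .
  then show "\<exists>x\<in>M. \<exists>s\<in>nf_S Oc M. s \<noteq> 0 \<and> \<alpha> - 1 = x / s"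
  proof (induction rule: ideal_mult_induct)
    case zero
    show ?case using ideal_zero[OF M] one_mem_S[OF M] by force
  next
    case (prod m l)
    then obtain y t where "y \<in> Oc" "t \<in> nf_S Oc M" "t \<noteq> 0" "l = y / t"
      unfolding nf_localize_def by blast
    moreover have "m * y \<in> M" using ideal_mult_right[OF M \<open>y \<in> Oc\<close> prod(1)] .
    ultimately show ?case by (intro bexI[of _ "m * y"] bexI[of _ t]) auto
  next
    case (add u v)
    then obtain x s y t where xs: "x \<in> M" "s \<in> nf_S Oc M" "s \<noteq> 0" "u = x / s"
      and yt: "y \<in> M" "t \<in> nf_S Oc M" "t \<noteq> 0" "v = y / t" by blast
    have "u + v = (x * t + y * s) / (s * t)" using xs yt by (simp add: field_simps)
    moreover have "x * t + y * s \<in> M" using xs yt mem_S_iff[OF M]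
      by (intro ideal_add[OF M] ideal_mult_right[OF M]) auto
    moreover have "s * t \<in> nf_S Oc M" "s * t \<noteq> 0" using S_mult[OF M xs(2) yt(2)] xs yt by auto
    ultimately show ?case by blast
  qed
next
  assume "\<exists>x\<in>M. \<exists>s\<in>nf_S Oc M. s \<noteq> 0 \<and> \<alpha> - 1 = x / s"
  then obtain x s where "x \<in> M" "s \<in> nf_S Oc M" "s \<noteq> 0" "\<alpha> - 1 = x * (1 / s)" by auto
  moreover have "1 / s \<in> nf_localize Oc (nf_S Oc M)"
    unfolding nf_localize_def using one_mem \<open>s \<in> nf_S Oc M\<close> \<open>s \<noteq> 0\<close> by blast
  ultimately show "nf_cong1 Oc M \<alpha>" unfolding nf_cong1_def by (metis mem_ideal_mult)
qed

lemma cong1_mult: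
  assumes M: "nf_integral_ideal Oc M" and "nf_cong1 Oc M \<alpha>" "nf_cong1 Oc M \<beta>"
  shows "nf_cong1 Oc M (\<alpha> * \<beta>)"
proof -
  obtain x s where xs: "x \<in> M" "s \<in> nf_S Oc M" "s \<noteq> 0" "\<alpha> - 1 = x / s"
    using assms(2) cong1_iff[OF M] by blast
  obtain y t where yt: "y \<in> M" "t \<in> nf_S Oc M" "t \<noteq> 0" "\<beta> - 1 = y / t"
    using assms(3) cong1_iff[OF M] by blast
  have \<alpha>\<beta>: "\<alpha> = (s + x) / s" "\<beta> = (t + y) / t" using xs yt by (simp_all add: field_simps)
  have "\<alpha> * \<beta> - 1 = (x * t + y * s + x * y) / (s * t)"
    unfolding \<alpha>\<beta> using xs yt by (simp add: field_simps)
  moreover have "x * t + y * s + x * y \<in> M" using xs yt mem_S_iff[OF M] ideal_subset[OF M]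
    by (intro ideal_add[OF M] ideal_mult_right[OF M]) auto
  moreover have "s * t \<in> nf_S Oc M" "s * t \<noteq> 0" using S_mult[OF M xs(2) yt(2)] xs yt by auto
  ultimately show ?thesis using cong1_iff[OF M] by blast
qed

lemma cong1_inverse:
  assumes M: "nf_integral_ideal Oc M" and "nf_cong1 Oc M \<alpha>" "\<alpha> \<noteq> 0"
  shows "nf_cong1 Oc M (inverse \<alpha>)"
proof -
  obtain x s where xs: "x \<in> M" "s \<in> nf_S Oc M" "s \<noteq> 0" "\<alpha> - 1 = x / s"
    using assms(2) cong1_iff[OF M] by blast
  have \<alpha>: "\<alpha> = (s + x) / s" using xs by (simp add: field_simps)
  then have "s + x \<noteq> 0" using assms(3) by auto
  then have "inverse \<alpha> - 1 = (- x) / (s + x)" unfolding \<alpha> using xs by (simp add: field_simps)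
  moreover have "- x \<in> M" using ideal_uminus[OF M xs(1)] .
  ultimately show ?thesis using cong1_iff[OF M] S_add[OF M xs(2,1)] \<open>s + x \<noteq> 0\<close> by blast
qed

lemma cong1_if_diff_mem: "nf_integral_ideal Oc M \<Longrightarrow> \<beta> - 1 \<in> M \<Longrightarrow> nf_cong1 Oc M \<beta>"
  using cong1_iff one_mem_S by fastforce

end

lemma real_embedding_of_int:
  assumes "nf_real_embedding \<rho>"
  shows "\<rho> (of_int k) = of_int k"
proof -
  have add: "\<rho> (x + y) = \<rho> x + \<rho> y" for x y using assms by (simp add: nf_real_embedding_def)
  have "\<rho> 0 = 0" using add[of 0 0] by simp
  then have neg: "\<rho> (- x) = - \<rho> x" for x using add[of x "- x"] by simp
  have "\<rho> (of_nat n) = of_nat n" for n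
    using assms \<open>\<rho> 0 = 0\<close> by (induction n) (simp_all add: add nf_real_embedding_def)
  then show ?thesis by (cases k rule: int_cases2) (simp_all add: neg)
qed

lemma real_embedding_inverse:
  assumes "nf_real_embedding \<rho>"
  shows "\<rho> (inverse x) = inverse (\<rho> x)"
proof (cases "x = 0")
  case True
  then show ?thesis using real_embedding_of_int[OF assms, of 0] by simp
next
  case False
  then have "\<rho> x * \<rho> (inverse x) = 1"
    using assms unfolding nf_real_embedding_def by (metis right_inverse)
  then show ?thesis by (simp add: inverse_unique)
qed

lemma real_embedding_one: "nf_real_embedding \<rho> \<Longrightarrow> \<rho> 1 = 1"
  by (simp add: nf_real_embedding_def)

lemma real_embedding_mult: "nf_real_embedding \<rho> \<Longrightarrow> \<rho> (x * y) = \<rho> x * \<rho> y"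
  by (simp add: nf_real_embedding_def)

text \<open>Positivity comes from \<open>a + N (1 + a\<^sup>2) \<ge> a + 1 + a\<^sup>2 > 0\<close> for real \<open>a\<close>.\<close>

lemma real_embedding_shift_pos:
  fixes N :: int
  assumes \<rho>: "nf_real_embedding \<rho>" and "N \<ge> 1"
  shows "\<rho> (\<beta> + of_int N * (1 + \<beta>\<^sup>2)) > 0"
proof -
  define a where "a = \<rho> \<beta>"
  have "\<rho> (\<beta> + of_int N * (1 + \<beta>\<^sup>2)) = a + of_int N * (1 + a\<^sup>2)"
    using \<rho> unfolding a_def nf_real_embedding_def by (simp add: power2_eq_square real_embedding_of_int[OF \<rho>])
  moreover have "0 \<le> (a + 1 / 2)\<^sup>2" by simp
  then have "0 < 1 + a + a\<^sup>2" by (simp add: power2_eq_square algebra_simps)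
  moreover have "1 + a\<^sup>2 \<le> of_int N * (1 + a\<^sup>2)"
    using mult_right_mono[of 1 "of_int N" "1 + a\<^sup>2"] \<open>N \<ge> 1\<close> by simp
  ultimately show ?thesis by linarith
qed

lemma Jgroup_restrict:
  "nf_Jgroup Oc D = (nf_Jgroup Oc M)\<lparr>carrier := nf_Jstar Oc D\<rparr>"
  by (simp add: nf_Jgroup_def)

context field_subring
begin

lemma P_subset_Jstar:
  assumes M: "nf_integral_ideal Oc M"
  shows "nf_P Oc M Sig \<subseteq> nf_Jstar Oc M"
proof
  fix A assume "A \<in> nf_P Oc M Sig"
  then obtain \<alpha> where "\<alpha> \<noteq> 0" "nf_cong1 Oc M \<alpha>" "A = nf_principal Oc \<alpha>" unfolding nf_P_def by blast
  then obtain x s where xs: "x \<in> M" "s \<in> nf_S Oc M" "s \<noteq> 0" "\<alpha> - 1 = x / s"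
    using cong1_iff[OF M] by blast
  have \<alpha>: "\<alpha> = (s + x) * inverse s" using xs by (simp add: field_simps)
  then have "s + x \<noteq> 0" using \<open>\<alpha> \<noteq> 0\<close> by auto
  have "A = nf_ideal_mult (nf_principal Oc (s + x)) (ideal_inv Oc (nf_principal Oc s))"
    unfolding \<open>A = _\<close> invertible_principal(2)[OF xs(3)] principal_mult \<alpha> ..
  then show "A \<in> nf_Jstar Oc M"
    unfolding Jstar_iff[OF M] using coprime_invertible_principal_S[OF M] S_add[OF M xs(2,1)]
      \<open>s + x \<noteq> 0\<close> xs(2,3) by blast
qed

lemma Oc_mem_P:
  assumes M: "nf_integral_ideal Oc M" and Sig: "\<forall>\<rho>\<in>Sig. nf_real_embedding \<rho>"
  shows "Oc \<in> nf_P Oc M Sig"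
proof -
  have "nf_cong1 Oc M 1" using cong1_if_diff_mem[OF M] ideal_zero[OF M] by simp
  moreover have "\<forall>\<rho>\<in>Sig. \<rho> 1 > 0" using Sig by (simp add: real_embedding_one)
  ultimately show ?thesis unfolding nf_P_def using principal_one[of Oc] by force
qed

lemma P_mult:
  assumes M: "nf_integral_ideal Oc M" and Sig: "\<forall>\<rho>\<in>Sig. nf_real_embedding \<rho>"
    and "A \<in> nf_P Oc M Sig" "B \<in> nf_P Oc M Sig"
  shows "nf_ideal_mult A B \<in> nf_P Oc M Sig"
proof -
  obtain \<alpha> \<beta> where \<alpha>: "\<alpha> \<noteq> 0" "nf_cong1 Oc M \<alpha>" "\<forall>\<rho>\<in>Sig. \<rho> \<alpha> > 0" "A = nf_principal Oc \<alpha>"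
    and \<beta>: "\<beta> \<noteq> 0" "nf_cong1 Oc M \<beta>" "\<forall>\<rho>\<in>Sig. \<rho> \<beta> > 0" "B = nf_principal Oc \<beta>"
    using assms(3,4) unfolding nf_P_def by blast
  have "\<forall>\<rho>\<in>Sig. \<rho> (\<alpha> * \<beta>) > 0" using \<alpha>(3) \<beta>(3) Sig by (simp add: real_embedding_mult)
  then show ?thesis
    unfolding nf_P_def \<alpha>(4) \<beta>(4) principal_mult using \<alpha> \<beta> cong1_mult[OF M \<alpha>(2) \<beta>(2)] by auto
qed

lemma P_ideal_inv:
  assumes M: "nf_integral_ideal Oc M" and Sig: "\<forall>\<rho>\<in>Sig. nf_real_embedding \<rho>"
    and "A \<in> nf_P Oc M Sig"
  shows "ideal_inv Oc A \<in> nf_P Oc M Sig"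
proof -
  obtain \<alpha> where \<alpha>: "\<alpha> \<noteq> 0" "nf_cong1 Oc M \<alpha>" "\<forall>\<rho>\<in>Sig. \<rho> \<alpha> > 0" "A = nf_principal Oc \<alpha>"
    using assms(3) unfolding nf_P_def by blast
  have "\<forall>\<rho>\<in>Sig. \<rho> (inverse \<alpha>) > 0" using \<alpha>(3) Sig by (simp add: real_embedding_inverse)
  then show ?thesis unfolding nf_P_def \<alpha>(4) invertible_principal(2)[OF \<alpha>(1)]
    using \<alpha> cong1_inverse[OF M \<alpha>(2,1)] by auto
qed

lemma subgroup_P:
  assumes M: "nf_integral_ideal Oc M" and Sig: "\<forall>\<rho>\<in>Sig. nf_real_embedding \<rho>"
  shows "subgroup (nf_P Oc M Sig) (nf_Jgroup Oc M)"
proof -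
  interpret comm_group "nf_Jgroup Oc M" by (rule comm_group_Jgroup[OF M])
  show ?thesis
  proof (rule subgroupI)
    show "nf_P Oc M Sig \<subseteq> carrier (nf_Jgroup Oc M)"
      using P_subset_Jstar[OF M] by (simp add: nf_Jgroup_def)
    show "nf_P Oc M Sig \<noteq> {}" using Oc_mem_P[OF M Sig] by blast
    fix A B assume A: "A \<in> nf_P Oc M Sig" and "B \<in> nf_P Oc M Sig"
    show "inv\<^bsub>nf_Jgroup Oc M\<^esub> A \<in> nf_P Oc M Sig"
      using inv_Jgroup[OF M subsetD[OF P_subset_Jstar[OF M] A]] P_ideal_inv[OF M Sig A] by simp
    show "A \<otimes>\<^bsub>nf_Jgroup Oc M\<^esub> B \<in> nf_P Oc M Sig"
      using P_mult[OF M Sig A \<open>B \<in> nf_P Oc M Sig\<close>] by (simp add: nf_Jgroup_def)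
  qed
qed

lemma subgroup_Jstar:
  assumes D: "nf_integral_ideal Oc D" and M: "nf_integral_ideal Oc M" and "D \<subseteq> M"
  shows "subgroup (nf_Jstar Oc D) (nf_Jgroup Oc M)"
proof -
  interpret comm_group "nf_Jgroup Oc M" by (rule comm_group_Jgroup[OF M])
  show ?thesis
    using group_incl_imp_subgroup Jstar_mono[OF M \<open>D \<subseteq> M\<close>] comm_group.axioms(2)[OF comm_group_Jgroup[OF D]]
    by (simp add: nf_Jgroup_def)
qed

lemma second_isomorphism_grp_P_Jstar:
  assumes "nf_integral_ideal Oc D" "nf_integral_ideal Oc M" "D \<subseteq> M"
    and "\<forall>\<rho>\<in>Sig. nf_real_embedding \<rho>"
  shows "second_isomorphism_grp (nf_P Oc M Sig) (nf_Jgroup Oc M) (nf_Jstar Oc D)"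
  using comm_group.subgroup_imp_normal[OF comm_group_Jgroup subgroup_P] subgroup_Jstar assms
  by (simp add: second_isomorphism_grp_def second_isomorphism_grp_axioms_def)

lemma Pd_eq_P_Int_Jstar: "nf_Pd Oc D M Sig = nf_P Oc M Sig \<inter> nf_Jstar Oc D"
  if "nf_integral_ideal Oc M"
  using P_subset_Jstar[OF that] unfolding nf_Pd_def nf_Jstar_def by blast

section \<open>Generators of invertible ideals modulo an ideal\<close>

text \<open>Multiply \<open>x y \<equiv> 1\<close> by an \<open>i \<in> I\<close> with \<open>i \<equiv> 1 mod M\<close> to clear the denominator of \<open>y\<close>.\<close>

lemma unit_mod_if_coprime:
  assumes M: "nf_integral_ideal Oc M" and I: "nf_integral_ideal Oc I" "nf_ideal_sum I M = Oc"
    and y: "y \<in> ideal_inv Oc I" and xy: "[x * y = 1] (mod\<^sub>I M)"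
  obtains v where "v \<in> Oc" "[v * x = 1] (mod\<^sub>I M)"
proof -
  interpret ideal_congruence Oc M by unfold_locales (rule M)
  obtain i m where i: "i \<in> I" "m \<in> M" "1 = i + m"
    using I(2) one_mem unfolding nf_ideal_sum_def by blast
  have "y * i \<in> Oc" using mult_mem_ideal_inv[OF i(1) y] by (simp add: mult.commute)
  have "y * i * x = (x * y) * i" by (simp add: ac_simps)
  also have "[\<dots> = 1 * i] (mod\<^sub>I M)" using ideal_subset[OF I(1) i(1)] xy by (rule cong_mult_right)
  also have "1 * i - 1 = - m" using i(3) by (simp add: algebra_simps)
  then have "[1 * i = 1] (mod\<^sub>I M)" unfolding ideal_cong_def using ideal_uminus[OF M i(2)] by simp
  finally show ?thesis using that \<open>y * i \<in> Oc\<close> by blast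
qed

lemma generator_shift:
  assumes D: "nf_integral_ideal Oc D" and M: "nf_integral_ideal Oc M" "D \<subseteq> M"
    and I: "nf_integral_ideal Oc I" and \<beta>: "\<beta> \<in> I" "[\<beta> = 1] (mod\<^sub>I M)"
    and y: "y \<in> ideal_inv Oc I" "[\<beta> * y = 1] (mod\<^sub>I D)" and "c \<in> D" "s \<in> I"
  shows "\<beta> + c * s \<in> I" "[\<beta> + c * s = 1] (mod\<^sub>I M)" "[(\<beta> + c * s) * y = 1] (mod\<^sub>I D)"
proof -
  interpret d: ideal_congruence Oc D by unfold_locales (rule D)
  interpret m: ideal_congruence Oc M by unfold_locales (rule M(1))
  have "s \<in> Oc" "c \<in> Oc" using ideal_subset[OF I \<open>s \<in> I\<close>] ideal_subset[OF D \<open>c \<in> D\<close>] .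
  show "\<beta> + c * s \<in> I" using \<beta>(1) \<open>s \<in> I\<close> \<open>c \<in> Oc\<close> by (intro ideal_add[OF I] ideal_mult_left[OF I])
  have cs: "[c * s = 0] (mod\<^sub>I D)" using ideal_mult_right[OF D \<open>s \<in> Oc\<close> \<open>c \<in> D\<close>] by (simp add: ideal_cong_def)
  have "[\<beta> + c * s = 1 + 0] (mod\<^sub>I M)" using \<beta>(2) ideal_cong_mono[OF M(2) cs] by (rule m.cong_add)
  then show "[\<beta> + c * s = 1] (mod\<^sub>I M)" by simp
  have "[c * (s * y) = 0] (mod\<^sub>I D)"
    using ideal_mult_right[OF D mult_mem_ideal_inv[OF \<open>s \<in> I\<close> y(1)] \<open>c \<in> D\<close>] by (simp add: ideal_cong_def)
  with y(2) have "[\<beta> * y + c * (s * y) = 1 + 0] (mod\<^sub>I D)" by (rule d.cong_add)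
  then show "[(\<beta> + c * s) * y = 1] (mod\<^sub>I D)" by (simp add: algebra_simps)
qed

text \<open>With \<open>\<beta> \<in> I\<close>, the ideal \<open>J = \<beta> I\<^sup>-\<^sup>1\<close> is integral, and it is coprime to \<open>D\<close> because it contains
  \<open>\<beta> y \<equiv> 1\<close>; hence \<open>\<beta>\<^sup>-\<^sup>1 I = J\<^sup>-\<^sup>1 \<in> J\<^sup>*\<^sub>D\<close>.\<close>

lemma scaled_ideal_in_Jstar:
  assumes D: "nf_integral_ideal Oc D" and I: "nf_integral_ideal Oc I" "nf_invertible Oc I"
    and \<beta>: "\<beta> \<in> I" "\<beta> \<noteq> 0" and y: "y \<in> ideal_inv Oc I" and \<beta>y: "[\<beta> * y = 1] (mod\<^sub>I D)"
  shows "nf_ideal_mult (nf_principal Oc (inverse \<beta>)) I \<in> nf_Jstar Oc D"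
proof -
  define J where "J = nf_ideal_mult (nf_principal Oc \<beta>) (ideal_inv Oc I)"
  define K where "K = nf_ideal_mult (nf_principal Oc (inverse \<beta>)) I"
  note inv = invertible_ideal_inv[OF I(2)]
  have "nf_principal Oc \<beta> \<subseteq> I"
    unfolding nf_principal_def using ideal_mult_right[OF I(1) _ \<beta>(1)] by blast
  then have "J \<subseteq> Oc" unfolding J_def using ideal_mult_mono[OF _ order_refl] inv(2) by blast
  then have J: "nf_integral_ideal Oc J"
    using omodule_ideal_mult[OF omodule_fractional[OF inv(1)]] unfolding J_def nf_integral_ideal_def omodule_def
    by blast
  have "nf_ideal_mult J K =
      nf_ideal_mult (nf_principal Oc (\<beta> * inverse \<beta>)) (nf_ideal_mult I (ideal_inv Oc I))"
    unfolding J_def K_def principal_mult[symmetric] by (simp only: ideal_mult_ac)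
  also have "\<dots> = Oc" using \<beta>(2) inv(2) ideal_mult_Oc_Oc by (simp add: principal_one)
  finally have JK: "nf_ideal_mult J K = Oc" .
  have "nf_fractional_ideal Oc K"
    unfolding K_def using fractional_ideal_mult fractional_principal fractional_integral[OF I(1)] \<beta>(2)
    by simp
  then have Jinv: "nf_invertible Oc J" and invJ: "ideal_inv Oc J = K"
    using invertibleI ideal_inv_unique fractional_integral[OF J] JK by blast+
  have "\<beta> * y \<in> J" unfolding J_def using mem_ideal_mult[OF mem_principal_self y] .
  moreover have "1 - \<beta> * y \<in> D" using \<beta>y ideal_uminus[OF D] unfolding ideal_cong_def by fastforce
  ultimately have "1 \<in> nf_ideal_sum J D" unfolding nf_ideal_sum_def by force
  then have "coprime_invertible Oc D J"
    using coprime_iff_one_mem[OF J D] J Jinv unfolding coprime_invertible_def by blast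
  moreover have "K = nf_ideal_mult Oc (ideal_inv Oc J)"
    using ideal_mult_Oc_left[OF omodule_fractional] \<open>nf_fractional_ideal Oc K\<close> invJ by simp
  ultimately show ?thesis unfolding K_def[symmetric] Jstar_iff[OF D] using coprime_invertible_Oc[OF D] by blast
qed

end

context nf_order
begin

lemma local_generator_mod:
  assumes D: "nf_integral_ideal Oc D" "D \<noteq> {0}" and I: "nf_invertible Oc I"
  obtains x y where "x \<in> I" "y \<in> ideal_inv Oc I" "[x * y = 1] (mod\<^sub>I D)"
proof -
  interpret ideal_congruence Oc D by unfold_locales (rule D(1))
  have "1 \<in> nf_ideal_mult I (ideal_inv Oc I)" using invertible_ideal_inv(2)[OF I] one_mem by simp
  then obtain n :: nat and xs ys :: "nat \<Rightarrow> 'a" where "1 = (\<Sum>i<n. xs i * ys i)"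
    and "\<forall>i<n. xs i \<in> I \<and> ys i \<in> ideal_inv Oc I" unfolding nf_ideal_mult_def by blast
  moreover have "omodule Oc I" "omodule Oc (ideal_inv Oc I)"
    using I invertible_ideal_inv(1)[OF I] omodule_fractional unfolding nf_invertible_def by blast+
  ultimately have "\<exists>a\<in>I. \<exists>b\<in>ideal_inv Oc I. [a * b = 1] (mod\<^sub>I D)"
    using single_product_mod[OF D _ _ mult_mem_ideal_inv one_mem, of I] by simp
  then show ?thesis using that by blast
qed

lemma generator_cong_one:
  assumes D: "nf_integral_ideal Oc D" "D \<noteq> {0}" and M: "nf_integral_ideal Oc M" and "D \<subseteq> M"
    and I: "coprime_invertible Oc M I"
  obtains \<beta> y where "\<beta> \<in> I" "[\<beta> = 1] (mod\<^sub>I M)" "y \<in> ideal_inv Oc I" "[\<beta> * y = 1] (mod\<^sub>I D)"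
proof -
  interpret d: ideal_congruence Oc D by unfold_locales (rule D(1))
  interpret m: ideal_congruence Oc M by unfold_locales (rule M)
  have I': "nf_integral_ideal Oc I" "nf_invertible Oc I" "nf_ideal_sum I M = Oc"
    using I unfolding coprime_invertible_def by blast+
  obtain x y where x: "x \<in> I" and y: "y \<in> ideal_inv Oc I" and xy: "[x * y = 1] (mod\<^sub>I D)"
    using local_generator_mod[OF D I'(2)] .
  have "x \<in> Oc" using ideal_subset[OF I'(1) x] .
  obtain v where "v \<in> Oc" "[v * x = 1] (mod\<^sub>I M)"
    using unit_mod_if_coprime[OF M I'(1,3) y ideal_cong_mono[OF \<open>D \<subseteq> M\<close> xy]] .
  then obtain u u' where u: "u \<in> Oc" "u' \<in> Oc" "[u = v] (mod\<^sub>I M)" "[u * u' = 1] (mod\<^sub>I D)"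
    using unit_mod_lift[OF D M \<open>D \<subseteq> M\<close> \<open>v \<in> Oc\<close> \<open>x \<in> Oc\<close>] by blast
  have "x * u \<in> I" using ideal_mult_right[OF I'(1) u(1) x] .
  moreover have "y * u' \<in> ideal_inv Oc I"
    using omodule_mult_right[OF omodule_fractional[OF invertible_ideal_inv(1)[OF I'(2)]] u(2) y] .
  moreover have "[x * u = 1] (mod\<^sub>I M)"
  proof -
    have "[x * u = x * v] (mod\<^sub>I M)" using \<open>x \<in> Oc\<close> u(3) by (rule m.cong_mult_left)
    also have "x * v = v * x" by (simp add: mult.commute)
    also note \<open>[v * x = 1] (mod\<^sub>I M)\<close>
    finally show ?thesis .
  qed
  moreover have "[x * u * (y * u') = 1] (mod\<^sub>I D)"
  proof -
    have "x * u * (y * u') = (x * y) * (u * u')" by (simp add: ac_simps)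
    also have "[\<dots> = 1 * (u * u')] (mod\<^sub>I D)" using mult_mem[OF u(1,2)] xy by (rule d.cong_mult_right)
    also have "1 * (u * u') = u * u'" by simp
    also note u(4)
    finally show ?thesis .
  qed
  ultimately show ?thesis using that by blast
qed

text \<open>Shifting \<open>\<beta>\<close> by \<open>k C (1 + \<beta>\<^sup>2)\<close>, with \<open>C\<close> a positive integer in \<open>D I\<close>, makes it positive at every
  real place; one of \<open>k = 1, 2\<close> also keeps it nonzero.\<close>

lemma positive_generator:
  assumes D: "nf_integral_ideal Oc D" "D \<noteq> {0}" and M: "nf_integral_ideal Oc M" and "D \<subseteq> M"
    and I: "coprime_invertible Oc M I" and Sig: "\<forall>\<rho>\<in>Sig. nf_real_embedding \<rho>"
  obtains \<beta> y where "\<beta> \<in> I" "\<beta> \<noteq> 0" "\<beta> - 1 \<in> M" "\<forall>\<rho>\<in>Sig. \<rho> \<beta> > 0"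
    "y \<in> ideal_inv Oc I" "[\<beta> * y = 1] (mod\<^sub>I D)"
proof -
  have I': "nf_integral_ideal Oc I" "nf_invertible Oc I"
    using I unfolding coprime_invertible_def by blast+
  obtain \<beta> y where \<beta>: "\<beta> \<in> I" "[\<beta> = 1] (mod\<^sub>I M)" and y: "y \<in> ideal_inv Oc I" "[\<beta> * y = 1] (mod\<^sub>I D)"
    using generator_cong_one[OF D M \<open>D \<subseteq> M\<close> I] .
  obtain c :: int where c: "c > 0" "of_int c \<in> D" using ideal_contains_pos_int[OF D] .
  obtain c' :: int where c': "c' > 0" "of_int c' \<in> I"
    using ideal_contains_pos_int[OF I'(1) invertible_nonzero[OF I'(2)]] .
  define \<beta>' where "\<beta>' k = \<beta> + of_int (k * c * c') * (1 + \<beta>\<^sup>2)" for k :: int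
  have good: "\<beta>' k \<in> I \<and> \<beta>' k - 1 \<in> M \<and> (\<forall>\<rho>\<in>Sig. \<rho> (\<beta>' k) > 0) \<and> [\<beta>' k * y = 1] (mod\<^sub>I D)"
    if "k \<ge> 1" for k
  proof -
    define s where "s = of_int (k * c') * (1 + \<beta>\<^sup>2)"
    have "s \<in> I" unfolding s_def of_int_mult
      using ideal_subset[OF I'(1) \<beta>(1)] c'(2)
      by (intro ideal_mult_right[OF I'(1)] ideal_mult_left[OF I'(1)] add_mem one_mem power_mem of_int_mem)
    have "\<beta>' k = \<beta> + of_int c * s" unfolding \<beta>'_def s_def by (simp add: ac_simps)
    note shift = generator_shift[OF D(1) M \<open>D \<subseteq> M\<close> I'(1) \<beta> y c(2) \<open>s \<in> I\<close>, folded this]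
    have "k * c * c' \<ge> 1"
      using \<open>k \<ge> 1\<close> c(1) c'(1) by (simp add: int_one_le_iff_zero_less zero_less_mult_iff)
    then have "\<forall>\<rho>\<in>Sig. \<rho> (\<beta>' k) > 0" using real_embedding_shift_pos Sig unfolding \<beta>'_def by blast
    with shift show ?thesis unfolding ideal_cong_def by blast
  qed
  have "\<beta>' 1 \<noteq> 0 \<or> \<beta>' 2 \<noteq> 0"
  proof (rule ccontr)
    define T where "T = of_int (c * c') * (1 + \<beta>\<^sup>2)"
    have "\<beta>' 1 = \<beta> + T" "\<beta>' 2 = \<beta> + 2 * T" unfolding \<beta>'_def T_def by simp_all
    moreover assume "\<not> (\<beta>' 1 \<noteq> 0 \<or> \<beta>' 2 \<noteq> 0)"
    ultimately have "\<beta> + T = 0" "\<beta> + 2 * T = 0" by simp_all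
    moreover have "T = (\<beta> + 2 * T) - (\<beta> + T)" "\<beta> = (\<beta> + T) - T" by simp_all
    ultimately have "T = 0" "\<beta> = 0" by simp_all
    then show False using c(1) c'(1) unfolding T_def by simp
  qed
  then show ?thesis using good[of 1] good[of 2] y that by auto
qed

lemma coprime_invertible_in_set_mult:
  assumes D: "nf_integral_ideal Oc D" "D \<noteq> {0}" and M: "nf_integral_ideal Oc M" and "D \<subseteq> M"
    and Sig: "\<forall>\<rho>\<in>Sig. nf_real_embedding \<rho>" and I: "coprime_invertible Oc M I"
  shows "I \<in> nf_P Oc M Sig <#>\<^bsub>nf_Jgroup Oc M\<^esub> nf_Jstar Oc D"
proof -
  obtain \<beta> y where \<beta>: "\<beta> \<in> I" "\<beta> \<noteq> 0" "\<beta> - 1 \<in> M" "\<forall>\<rho>\<in>Sig. \<rho> \<beta> > 0"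
    and y: "y \<in> ideal_inv Oc I" "[\<beta> * y = 1] (mod\<^sub>I D)"
    using positive_generator[OF D M \<open>D \<subseteq> M\<close> I Sig] .
  have I': "nf_integral_ideal Oc I" "nf_invertible Oc I"
    using I unfolding coprime_invertible_def by blast+
  have "nf_principal Oc \<beta> \<in> nf_P Oc M Sig"
    unfolding nf_P_def using \<beta> cong1_if_diff_mem[OF M] by blast
  moreover have "nf_ideal_mult (nf_principal Oc (inverse \<beta>)) I \<in> nf_Jstar Oc D"
    using scaled_ideal_in_Jstar[OF D(1) I' \<beta>(1,2) y] .
  moreover have "I = nf_ideal_mult (nf_principal Oc \<beta>) (nf_ideal_mult (nf_principal Oc (inverse \<beta>)) I)"
    unfolding ideal_mult_assoc[symmetric] principal_mult
    using \<beta>(2) ideal_mult_Oc_left[OF omodule_integral_ideal[OF I'(1)]] by (simp add: principal_one)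
  ultimately show ?thesis unfolding set_mult_def by (auto simp: nf_Jgroup_def)
qed

lemma set_mult_P_Jstar:
  assumes D: "nf_integral_ideal Oc D" "D \<noteq> {0}" and M: "nf_integral_ideal Oc M" and "D \<subseteq> M"
    and Sig: "\<forall>\<rho>\<in>Sig. nf_real_embedding \<rho>"
  shows "nf_P Oc M Sig <#>\<^bsub>nf_Jgroup Oc M\<^esub> nf_Jstar Oc D = carrier (nf_Jgroup Oc M)"
proof -
  interpret second_isomorphism_grp "nf_P Oc M Sig" "nf_Jgroup Oc M" "nf_Jstar Oc D"
    using second_isomorphism_grp_P_Jstar[OF D(1) M \<open>D \<subseteq> M\<close> Sig] .
  have sub: "subgroup (nf_P Oc M Sig <#>\<^bsub>nf_Jgroup Oc M\<^esub> nf_Jstar Oc D) (nf_Jgroup Oc M)"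
    by (rule normal_set_mult_subgroup)
  show ?thesis
  proof
    show "nf_P Oc M Sig <#>\<^bsub>nf_Jgroup Oc M\<^esub> nf_Jstar Oc D \<subseteq> carrier (nf_Jgroup Oc M)"
      using subgroup.subset[OF sub] .
    show "carrier (nf_Jgroup Oc M) \<subseteq> nf_P Oc M Sig <#>\<^bsub>nf_Jgroup Oc M\<^esub> nf_Jstar Oc D"
    proof
      fix A assume "A \<in> carrier (nf_Jgroup Oc M)"
      then have "A \<in> nf_Jstar Oc M" by (simp add: nf_Jgroup_def)
      then obtain A1 A2 where A: "coprime_invertible Oc M A1" "coprime_invertible Oc M A2"
        "A = nf_ideal_mult A1 (ideal_inv Oc A2)"
        unfolding Jstar_iff[OF M] by blast
      have "A = A1 \<otimes>\<^bsub>nf_Jgroup Oc M\<^esub> inv\<^bsub>nf_Jgroup Oc M\<^esub> A2"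
        using inv_Jgroup[OF M coprime_invertible_in_Jstar[OF M A(2)]] A(3) by (simp add: nf_Jgroup_def)
      then show "A \<in> nf_P Oc M Sig <#>\<^bsub>nf_Jgroup Oc M\<^esub> nf_Jstar Oc D"
        using coprime_invertible_in_set_mult[OF D M \<open>D \<subseteq> M\<close> Sig] A(1,2) sub
        by (simp add: subgroup.m_closed subgroup.m_inv_closed)
    qed
  qed
qed

end

section \<open>The isomorphism of ray class groups\<close>

lemma (in second_isomorphism_grp) quotient_iso_of_set_mult_eq:
  assumes "H <#> S = carrier G"
  shows "\<exists>\<phi>. \<phi> \<in> iso (G\<lparr>carrier := S\<rparr> Mod (H \<inter> S)) (G Mod H) \<and>
    (\<forall>a\<in>S. \<phi> ((H \<inter> S) #>\<^bsub>G\<lparr>carrier := S\<rparr>\<^esub> a) = H #> a)"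
proof (intro exI conjI ballI)
  show "(\<lambda>X. the_elem ((\<lambda>g. H #> g) ` X)) \<in> iso (G\<lparr>carrier := S\<rparr> Mod (H \<inter> S)) (G Mod H)"
    using normal_intersection_quotient_isom assms by simp
  fix a assume "a \<in> S"
  then have "a \<in> carrier G" using subgroup.mem_carrier[OF subgrpS] by blast
  show "the_elem ((\<lambda>g. H #> g) ` ((H \<inter> S) #>\<^bsub>G\<lparr>carrier := S\<rparr>\<^esub> a)) = H #> a"
  proof (rule the_elem_image_unique)
    show "(H \<inter> S) #>\<^bsub>G\<lparr>carrier := S\<rparr>\<^esub> a \<noteq> {}"
      using subgroup.one_closed[OF is_subgroup] subgroup.one_closed[OF subgrpS]
      unfolding r_coset_def by blast
    fix g assume "g \<in> (H \<inter> S) #>\<^bsub>G\<lparr>carrier := S\<rparr>\<^esub> a"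
    then obtain h where "h \<in> H" "g = h \<otimes> a" unfolding r_coset_def by auto
    then have "H #> g = (H #> h) #> a"
      using coset_mult_assoc[OF subset _ \<open>a \<in> carrier G\<close>] by simp
    also have "H #> h = H" using rcos_const[OF is_group \<open>h \<in> H\<close>] .
    finally show "H #> g = H #> a" .
  qed
qed

theorem lemma5p12:
  fixes Oc D M :: "'a::field_char_0 set" and Sig :: "('a \<Rightarrow> real) set"
  assumes "nf_is_order Oc"
    and "nf_integral_ideal Oc D" and "nf_integral_ideal Oc M"
    and "D \<noteq> {0}" and "M \<noteq> {0}" and "D \<subseteq> M"
    and "\<forall>\<rho>\<in>Sig. nf_real_embedding \<rho>"
  shows "nf_Jstar Oc D \<subseteq> nf_Jstar Oc M \<and>
    (\<exists>h. h \<in> iso (nf_Jgroup Oc D Mod nf_Pd Oc D M Sig) (nf_Jgroup Oc M Mod nf_P Oc M Sig) \<and>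
         (\<forall>A \<in> nf_Jstar Oc D.
            h (nf_Pd Oc D M Sig #>\<^bsub>nf_Jgroup Oc D\<^esub> A) = nf_P Oc M Sig #>\<^bsub>nf_Jgroup Oc M\<^esub> A))"
proof -
  interpret nf_order Oc by unfold_locales (rule assms(1))
  interpret second_isomorphism_grp "nf_P Oc M Sig" "nf_Jgroup Oc M" "nf_Jstar Oc D"
    using second_isomorphism_grp_P_Jstar[OF assms(2,3,6,7)] .
  have "r_coset (nf_Jgroup Oc D) = r_coset (nf_Jgroup Oc M\<lparr>carrier := nf_Jstar Oc D\<rparr>)"
    by (simp add: Jgroup_restrict[of Oc D M])
  then show ?thesis
    using Jstar_mono[OF assms(3,6)]
      quotient_iso_of_set_mult_eq[OF set_mult_P_Jstar[OF assms(2,4,3,6,7)]]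
    by (simp add: Pd_eq_P_Int_Jstar[OF assms(3)] Jgroup_restrict[of Oc D M, symmetric] Int_commute)
qed

end
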